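(* Under Assumptions A1–A3 (see context), with $\tilde\theta_k=\theta-\theta_k$ and $\tilde{\bar\theta}_k=\theta-\bar\theta_k$, $$|\psi_k-\beta_k\phi_k^{\mathrm T}\tilde\theta_k|=O\big(|\phi_k^{\mathrm T}\tilde{\bar\theta}_k|\big)\quad\text{a.s.},$$ i.e. there is an a.s. finite random constant $K$, independent of $k$, with $|\psi_k-\beta_k\phi_k^{\mathrm T}\tilde\theta_k|\le K|\phi_k^{\mathrm T}\tilde{\bar\theta}_k|$ for all $k$, where $$\psi_k=\mathbb E_k\{\operatorname{sgn}[y_{k+1}-S_k(\phi_k^{\mathrm T}\theta_k)]\}+F_{k+1}(u_k-\phi_k^{\mathrm T}\theta_k)\mathrm I_{[S_k(\phi_k^{\mathrm T}\theta_k)=U_k]}-[1-F_{k+1}(l_k-\phi_k^{\mathrm T}\theta_k)]\mathrm I_{[S_k(\phi_k^{\mathrm T}\theta_k)=L_k]}.$$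
   Context: Setting. Let $\{\mathcal F_k\}_{k\ge0}$ be a nondecreasing sequence of $\sigma$-algebras and write $\mathbb E_k[\cdot]=\mathbb E[\cdot\mid\mathcal F_k]$. Observations follow the saturated model $y_{k+1}=S_k(\phi_k^{\mathrm T}\theta+\varepsilon_{k+1})$, $k=0,1,2,\dots$, where $\phi_k\in\mathbb R^d$ is $\mathcal F_k$-measurable, $\theta\in\mathbb R^d$ is unknown, $\varepsilon_{k+1}\in\mathbb R$ is noise ($\mathcal F_{k+1}$-measurable), and $S_k(x)=L_k$ if $x<l_k$, $S_k(x)=x$ if $l_k\le x\le u_k$, $S_k(x)=U_k$ if $x>u_k$. Assumption A1: $\{\phi_k\}$ is bounded in $k$, and $\theta$ is an interior point of a known convex compact set $D\subseteq\mathbb R^d$. Let $\{C_k\}$ be a bounded $\mathcal F_k$-adapted sequence with $\sup_{x\in D}|\phi_k^{\mathrm T}x|\le C_k$. Assumption A2: $l_k,u_k,L_k,U_k$ are known $\mathcal F_k$-measurable random variables with $L_k\le l_k\le u_k\le U_k$ a.s.; there is a constant $M$ with $\sup_{k\ge0}\max\{l_k,-u_k\}\le M<\infty$ a.s.; and $L_k=l_k=u_k=U_k$ does not hold a.s. The weights $b_k$ are known, $\mathcal F_k$-measurable, with $0<\inf_k b_k\le\sup_k b_k\le 1$. Assumption A3: the conditional distribution function $F_{k+1}$ of $\varepsilon_{k+1}$ given $\mathcal F_k$ satisfies $F_{k+1}(0)=1/2$; its conditional density $f_{k+1}$ is continuous and known; and there is a constant $C\ge\sup_k C_k$ with $0<\inf_{|x|\le\max\{2C,C+M\},k\ge0}f_{k+1}(x)\le\sup_{|x|\le\max\{2C,C+M\},k\ge0}f_{k+1}(x)<\infty$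 a.s. Projection: for positive definite $Q$, $\|x\|_Q^2=x^{\mathrm T}Qx$ and $\Pi_Q(x)=\arg\min_{y\in D}\|x-y\|_Q$. TSWLAD algorithm. Step 1: with $\bar\theta_0\in D$, $\bar P_0>0$, and an $\mathcal F_k$-adapted sequence $\bar\mu_k$ with $0<\inf\bar\mu_k\le\sup\bar\mu_k<\infty$, for $k\ge0$: $\bar\theta_{k+1}=\Pi_{\bar P_{k+1}^{-1}}\{\bar\theta_k+\bar a_k b_k\bar P_k\phi_k\bar v_{k+1}\}$, $\bar v_{k+1}=\operatorname{sgn}[y_{k+1}-S_k(\phi_k^{\mathrm T}\bar\theta_k)]+F_{k+1}(u_k-\phi_k^{\mathrm T}\bar\theta_k)\mathrm I_{[S_k(\phi_k^{\mathrm T}\bar\theta_k)=U_k]}-[1-F_{k+1}(l_k-\phi_k^{\mathrm T}\bar\theta_k)]\mathrm I_{[S_k(\phi_k^{\mathrm T}\bar\theta_k)=L_k]}$, $\bar P_{k+1}=\bar P_k-\bar a_k\bar\beta_k b_k^2\bar P_k\phi_k\phi_k^{\mathrm T}\bar P_k$, $\bar a_k=1/(\bar\mu_k+\bar\beta_k b_k^2\phi_k^{\mathrm T}\bar P_k\phi_k)$, $\bar\beta_k=\inf_{|x|\le\max\{2C_k,C_k+l_k,C_k-u_k\}}f_{k+1}(x)$. Step 2: with $\theta_0\in D$, $P_0>0$, and $\mu_k$ with $0<\inf\mu_k\le\sup\mu_k<\infty$, for $k\ge0$, letting $d_k=\phi_k^{\mathrm T}(\bar\theta_k-\theta_k)$: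 $\theta_{k+1}=\Pi_{P_{k+1}^{-1}}\{\theta_k+a_kb_kP_k\phi_kv_{k+1}\}$, $v_{k+1}=\operatorname{sgn}[y_{k+1}-S_k(\phi_k^{\mathrm T}\theta_k)]+F_{k+1}(u_k-\phi_k^{\mathrm T}\theta_k)\mathrm I_{[S_k(\phi_k^{\mathrm T}\theta_k)=U_k]}-[1-F_{k+1}(l_k-\phi_k^{\mathrm T}\theta_k)]\mathrm I_{[S_k(\phi_k^{\mathrm T}\theta_k)=L_k]}$, $P_{k+1}=P_k-a_k\beta_kb_k^2P_k\phi_k\phi_k^{\mathrm T}P_k$, $a_k=1/(\mu_k+\beta_kb_k^2\phi_k^{\mathrm T}P_k\phi_k)$, and $\beta_k=\frac{F_{k+1}(l_k-\phi_k^{\mathrm T}\theta_k)-F_{k+1}(l_k-\phi_k^{\mathrm T}\bar\theta_k)}{d_k}\mathrm I_{[d_k\ne0]}+f_{k+1}(l_k-\phi_k^{\mathrm T}\theta_k)\mathrm I_{[d_k=0]}$ if $S_k(\phi_k^{\mathrm T}\theta_k)=L_k$; $\beta_k=\frac{1-2F_{k+1}(\phi_k^{\mathrm T}\theta_k-\phi_k^{\mathrm T}\bar\theta_k)}{d_k}\mathrm I_{[d_k\ne0]}+2f_{k+1}(0)\mathrm I_{[d_k=0]}$ if $L_k<S_k(\phi_k^{\mathrm T}\theta_k)<U_k$; $\beta_k=\frac{F_{k+1}(u_k-\phi_k^{\mathrm T}\theta_k)-F_{k+1}(u_k-\phi_k^{\mathrm T}\bar\theta_k)}{d_k}\mathrm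 I_{[d_k\ne0]}+f_{k+1}(u_k-\phi_k^{\mathrm T}\theta_k)\mathrm I_{[d_k=0]}$ if $S_k(\phi_k^{\mathrm T}\theta_k)=U_k$. Here $\operatorname{sgn}$ is the sign function and $\mathrm I_{[\cdot]}$ the indicator. *)

theory Defs
  imports "HOL-Probability.Probability"
begin

definition Sat :: "real \<Rightarrow> real \<Rightarrow> real \<Rightarrow> real \<Rightarrow> real \<Rightarrow> real" where
  "Sat L l u U x = (if x < l then L else if x > u then U else x)"

definition ind :: "bool \<Rightarrow> real" where
  "ind b = (if b then 1 else 0)"

definition corr :: "(real \<Rightarrow> real) \<Rightarrow> real \<Rightarrow> real \<Rightarrow> real \<Rightarrow> real \<Rightarrow> real \<Rightarrow> real" where
  "corr F L l u U x =
     F (u - x) * ind (Sat L l u U x = U) - (1 - F (l - x)) * ind (Sat L l u U x = L)"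

definition qnorm :: "real^'n^'n \<Rightarrow> real^'n \<Rightarrow> real" where
  "qnorm Q x = sqrt (x \<bullet> (Q *v x))"

definition proj :: "real^'n^'n \<Rightarrow> (real^'n) set \<Rightarrow> real^'n \<Rightarrow> real^'n" where
  "proj Q D x = (SOME y. y \<in> D \<and> (\<forall>z\<in>D. qnorm Q (x - y) \<le> qnorm Q (x - z)))"

definition posdef :: "real^'n^'n \<Rightarrow> bool" where
  "posdef Q \<longleftrightarrow> transpose Q = Q \<and> (\<forall>x. x \<noteq> 0 \<longrightarrow> x \<bullet> (Q *v x) > 0)"

definition outer :: "real^'n \<Rightarrow> real^'n \<Rightarrow> real^'n^'n" where
  "outer x y = (\<chi> i j. x $ i * y $ j)"

text \<open>F is (a regular version of) the conditional distribution function of X given G,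
  with (conditional) density f.\<close>
definition cond_cdf_density ::
  "'a measure \<Rightarrow> 'a measure \<Rightarrow> ('a \<Rightarrow> real) \<Rightarrow> ('a \<Rightarrow> real \<Rightarrow> real) \<Rightarrow> ('a \<Rightarrow> real \<Rightarrow> real) \<Rightarrow> bool"
where
  "cond_cdf_density M G X F f \<longleftrightarrow>
     (\<forall>x. (\<lambda>\<omega>. F \<omega> x) \<in> borel_measurable G \<and>
          (AE \<omega> in M. F \<omega> x =
             real_cond_exp M G (indicator {\<omega>\<in>space M. X \<omega> \<le> x} :: 'a \<Rightarrow> real) \<omega>)) \<and>
     (\<forall>\<omega>\<in>space M. mono (F \<omega>) \<and> (F \<omega> \<longlongrightarrow> 0) at_bot \<and> (F \<omega> \<longlongrightarrow> 1) at_top \<and>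
        continuous_on UNIV (f \<omega>) \<and> (\<forall>x. f \<omega> x \<ge> 0) \<and>
        (\<forall>x. (f \<omega> has_integral F \<omega> x) {..x}))"

text \<open>beta_k of Step 2 (case analysis on S_k(phi_k^T theta_k)); xk = phi_k^T theta_k,
  xbk = phi_k^T thetabar_k, d_k = xbk - xk.\<close>
definition beta2 :: "(real \<Rightarrow> real) \<Rightarrow> (real \<Rightarrow> real) \<Rightarrow> real \<Rightarrow> real \<Rightarrow> real \<Rightarrow> real \<Rightarrow> real \<Rightarrow> real \<Rightarrow> real"
where
  "beta2 F f L l u U xk xbk =
    (let d = xbk - xk; s = Sat L l u U xk in
     if s = L then
       (if d \<noteq> 0 then (F (l - xk) - F (l - xbk)) / d else f (l - xk))
     else if L < s \<and> s < U then
       (if d \<noteq> 0 then (1 - 2 * F (xk - xbk)) / d else 2 * f 0)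
     else
       (if d \<noteq> 0 then (F (u - xk) - F (u - xbk)) / d else f (u - xk)))"

end

theory Submission
  imports Defs
begin

text \<open>
  Given F_k the iterate theta_k is known, so by the conditional distribution function
  F = F_{k+1} of the noise, psi_k = alpha (F c - F (c - t)) with t = phi_k' (theta - theta_k),
  where (c, alpha) is (l_k - phi_k' theta_k, 1), (0, 2) or (u_k - phi_k' theta_k, 1) according as
  S_k(phi_k' theta_k) equals L_k, lies strictly between L_k and U_k, or equals U_k; and beta_k is the
  matching difference quotient alpha (F c - F (c - d)) / d at d = phi_k' (thetabar_k - theta_k).
  All arguments of F lie in [-R, R] with R = max (2 C) (C + M), where A3 bounds the density, so F
  is Lipschitz there and, with G s = F c - F (c - s),
  psi_k - beta_k t = alpha (G t - G d) + alpha (G d / d) (d - t) is at most a constant times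
  |t - d| = |phi_k' (theta - thetabar_k)|.

  The first step needs E[1{eps <= Z} | F_k] = F(Z) for F_k-measurable levels Z (obtained from
  constant levels by dyadic approximation from above), the absence of atoms of eps at such
  levels, and adaptedness of both iterates; the latter rests on the measurability of matrix
  inversion (Cramer's rule) and of the weighted projection onto D, whose minimiser is unique and
  hence characterised by comparing infima over compact sets.
\<close>

section \<open>Caratheodory functions and measurable infima\<close>

text \<open>Rounding up to the grid of step 2^-n after clamping to [-n, n], so that only finitely
  many values occur for each n.\<close>
definition dyadic_ceiling :: "nat \<Rightarrow> real \<Rightarrow> real" where
  "dyadic_ceiling n z = real_of_int \<lceil>max (- real n) (min (real n) z) * 2 ^ n\<rceil> / 2 ^ n"

lemma dyadic_ceiling_eventually_ge_tendsto:
  "eventually (\<lambda>n. z \<le> dyadic_ceiling n z \<and> dyadic_ceiling n z \<le> z + (1/2) ^ n) sequentially"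
proof (rule eventually_sequentiallyI[of "nat \<lceil>\<bar>z\<bar>\<rceil>"])
  fix n assume "nat \<lceil>\<bar>z\<bar>\<rceil> \<le> n"
  then have "max (- real n) (min (real n) z) = z" by linarith
  moreover have "z * 2 ^ n \<le> real_of_int \<lceil>z * 2 ^ n\<rceil>" "real_of_int \<lceil>z * 2 ^ n\<rceil> < z * 2 ^ n + 1"
    by linarith+
  ultimately show "z \<le> dyadic_ceiling n z \<and> dyadic_ceiling n z \<le> z + (1/2) ^ n"
    by (auto simp: dyadic_ceiling_def field_simps power_one_over)
qed

lemma dyadic_ceiling_eventually_ge: "eventually (\<lambda>n. z \<le> dyadic_ceiling n z) sequentially"
  using dyadic_ceiling_eventually_ge_tendsto[of z] by (rule eventually_mono) simp

lemma dyadic_ceiling_tendsto: "(\<lambda>n. dyadic_ceiling n z) \<longlonglongrightarrow> z"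
proof (rule tendsto_sandwich[of "\<lambda>n. z" _ _ "\<lambda>n. z + (1/2) ^ n"])
  show "eventually (\<lambda>n. z \<le> dyadic_ceiling n z) sequentially"
    "eventually (\<lambda>n. dyadic_ceiling n z \<le> z + (1/2) ^ n) sequentially"
    using dyadic_ceiling_eventually_ge_tendsto[of z] by (auto elim: eventually_mono)
  show "(\<lambda>n. z + (1/2) ^ n) \<longlonglongrightarrow> z"
    using tendsto_add[OF tendsto_const[of z] LIMSEQ_power_zero[of "1/2::real"]] by simp
qed simp

lemma finite_range_dyadic_ceiling: "finite (range (dyadic_ceiling n))"
proof (rule finite_subset)
  show "range (dyadic_ceiling n) \<subseteq> (\<lambda>j. real_of_int j / 2 ^ n) ` {- (int n * 2 ^ n) .. int n * 2 ^ n}"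
  proof
    fix r assume "r \<in> range (dyadic_ceiling n)"
    then obtain z where r: "r = dyadic_ceiling n z" by blast
    let ?t = "max (- real n) (min (real n) z) * 2 ^ n"
    have "- real n * 2 ^ n \<le> ?t" "?t \<le> real n * 2 ^ n"
      by (intro mult_right_mono; simp)+
    then have "\<lceil>?t\<rceil> \<in> {- (int n * 2 ^ n) .. int n * 2 ^ n}"
      by (simp add: ceiling_le_iff le_ceiling_iff)
    then show "r \<in> (\<lambda>j. real_of_int j / 2 ^ n) ` {- (int n * 2 ^ n) .. int n * 2 ^ n}"
      unfolding r dyadic_ceiling_def by blast
  qed
qed simp

lemma borel_measurable_dyadic_ceiling[measurable (raw)]:
  assumes [measurable]: "Z \<in> borel_measurable M"
  shows "(\<lambda>\<omega>. dyadic_ceiling n (Z \<omega>)) \<in> borel_measurable M"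
  unfolding dyadic_ceiling_def by measurable

lemma measurable_Caratheodory:
  fixes h :: "'a \<Rightarrow> real \<Rightarrow> real" and Z :: "'a \<Rightarrow> real"
  assumes h_measurable: "\<And>y. (\<lambda>\<omega>. h \<omega> y) \<in> borel_measurable M"
    and h_continuous: "\<And>\<omega> y. \<omega> \<in> space M \<Longrightarrow> isCont (h \<omega>) y"
    and Z[measurable]: "Z \<in> borel_measurable M"
  shows "(\<lambda>\<omega>. h \<omega> (Z \<omega>)) \<in> borel_measurable M"
proof (rule borel_measurable_LIMSEQ_real)
  fix n
  let ?V = "range (dyadic_ceiling n)"
  have "h \<omega> (dyadic_ceiling n (Z \<omega>))
      = (\<Sum>v\<in>?V. indicator {\<omega>\<in>space M. dyadic_ceiling n (Z \<omega>) = v} \<omega> * h \<omega> v)"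
    if "\<omega> \<in> space M" for \<omega>
    using that finite_range_dyadic_ceiling[of n]
    by (simp add: indicator_def if_distrib[of "\<lambda>c. c * _"] sum.delta cong: if_cong)
  moreover have "(\<lambda>\<omega>. \<Sum>v\<in>?V. indicator {\<omega>\<in>space M. dyadic_ceiling n (Z \<omega>) = v} \<omega> * h \<omega> v)
      \<in> borel_measurable M"
    using h_measurable by measurable
  ultimately show "(\<lambda>\<omega>. h \<omega> (dyadic_ceiling n (Z \<omega>))) \<in> borel_measurable M"
    by (subst measurable_cong) auto
next
  show "(\<lambda>n. h \<omega> (dyadic_ceiling n (Z \<omega>))) \<longlonglongrightarrow> h \<omega> (Z \<omega>)" if "\<omega> \<in> space M" for \<omega>
    using isCont_tendsto_compose[OF h_continuous[OF that] dyadic_ceiling_tendsto] .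
qed

lemma INF_dense_subset_eq:
  fixes g :: "'b::metric_space \<Rightarrow> real"
  assumes g: "continuous_on S g" and S: "compact S" "S \<noteq> {}" and T: "T \<subseteq> S" "S \<subseteq> closure T"
  shows "(INF x\<in>S. g x) = (INF x\<in>T. g x)"
proof (rule antisym)
  have bdd_S: "bdd_below (g ` S)"
    using compact_imp_bounded[OF compact_continuous_image[OF g S(1)]] by (rule bounded_imp_bdd_below)
  then show "(INF x\<in>S. g x) \<le> (INF x\<in>T. g x)"
    using S(2) T by (intro cINF_superset_mono) auto
  have bdd_T: "bdd_below (g ` T)" using bdd_S T(1) by (meson bdd_below_mono image_mono)
  show "(INF x\<in>T. g x) \<le> (INF x\<in>S. g x)"
  proof (rule cINF_greatest[OF S(2)])
    fix x assume x: "x \<in> S"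
    then obtain t where t: "\<And>n. t n \<in> T" "t \<longlonglongrightarrow> x" using T(2) closure_sequential by blast
    have "(\<lambda>n. g (t n)) \<longlonglongrightarrow> g x"
      using t(1) T(1) by (intro continuous_on_tendsto_compose[OF g t(2) x] always_eventually) auto
    moreover have "(INF x\<in>T. g x) \<le> g (t n)" for n using t(1) bdd_T by (intro cINF_lower)
    ultimately show "(INF x\<in>T. g x) \<le> g x" by (intro LIMSEQ_le_const) auto
  qed
qed

lemma borel_measurable_INF_compact:
  fixes h :: "'a \<Rightarrow> 'b::{metric_space, second_countable_topology} \<Rightarrow> real"
  assumes h_measurable: "\<And>y. (\<lambda>\<omega>. h \<omega> y) \<in> borel_measurable M"
    and h_continuous: "\<And>\<omega>. \<omega> \<in> space M \<Longrightarrow> continuous_on K (h \<omega>)"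
    and K: "compact K" "K \<noteq> {}"
  shows "(\<lambda>\<omega>. INF y\<in>K. h \<omega> y) \<in> borel_measurable M"
proof -
  obtain T where T: "countable T" "T \<subseteq> K" "K \<subseteq> closure T" using separable by blast
  have "(\<lambda>\<omega>. INF y\<in>T. h \<omega> y) \<in> borel_measurable M"
    by (rule borel_measurable_cINF_real[OF T(1) h_measurable])
  moreover have "(INF y\<in>K. h \<omega> y) = (INF y\<in>T. h \<omega> y)" if "\<omega> \<in> space M" for \<omega>
    by (rule INF_dense_subset_eq[OF h_continuous[OF that] K T(2,3)])
  ultimately show ?thesis by (subst measurable_cong) auto
qed

lemma borel_measurable_Inf_abs_le:
  fixes h :: "'a \<Rightarrow> real \<Rightarrow> real" and r :: "'a \<Rightarrow> real"
  assumes h_measurable: "\<And>y. (\<lambda>\<omega>. h \<omega> y) \<in> borel_measurable M"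
    and h_continuous: "\<And>\<omega> y. \<omega> \<in> space M \<Longrightarrow> isCont (h \<omega>) y"
    and r[measurable]: "r \<in> borel_measurable M" and r_nonneg: "\<And>\<omega>. \<omega> \<in> space M \<Longrightarrow> 0 \<le> r \<omega>"
  shows "(\<lambda>\<omega>. Inf (h \<omega> ` {x. \<bar>x\<bar> \<le> r \<omega>})) \<in> borel_measurable M"
proof -
  have "{x. \<bar>x\<bar> \<le> r \<omega>} = (\<lambda>t. r \<omega> * t) ` {-1..1}" if "\<omega> \<in> space M" for \<omega>
  proof (cases "r \<omega> = 0")
    case False
    with r_nonneg[OF that] have "r \<omega> > 0" by simp
    show ?thesis
    proof (intro set_eqI iffI)
      fix x assume "x \<in> {x. \<bar>x\<bar> \<le> r \<omega>}"
      then show "x \<in> (\<lambda>t. r \<omega> * t) ` {-1..1}"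
        using \<open>r \<omega> > 0\<close> by (intro image_eqI[where x="x / r \<omega>"]) (auto simp: field_simps abs_le_iff)
    qed (use \<open>r \<omega> > 0\<close> in \<open>auto simp: abs_mult intro: mult_left_le[where a="\<bar>_\<bar>", simplified]\<close>)
  qed (auto intro: image_eqI[where x=0])
  then have "Inf (h \<omega> ` {x. \<bar>x\<bar> \<le> r \<omega>}) = (INF t\<in>{-1..1}. h \<omega> (r \<omega> * t))" if "\<omega> \<in> space M" for \<omega>
    using that by (simp add: image_image)
  moreover have "(\<lambda>\<omega>. INF t\<in>{-1..1}. h \<omega> (r \<omega> * t)) \<in> borel_measurable M"
  proof (rule borel_measurable_INF_compact)
    show "(\<lambda>\<omega>. h \<omega> (r \<omega> * t)) \<in> borel_measurable M" for t
      by (rule measurable_Caratheodory[OF h_measurable h_continuous]) measurable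
    show "continuous_on {-1..1} (\<lambda>t. h \<omega> (r \<omega> * t))" if "\<omega> \<in> space M" for \<omega>
      by (intro continuous_at_imp_continuous_on ballI continuous_at_compose[of _ "\<lambda>t. r \<omega> * t" "h \<omega>", unfolded o_def]
          continuous_intros h_continuous[OF that])
  qed auto
  ultimately show ?thesis by (subst measurable_cong) auto
qed

section \<open>The saturated observation\<close>

text \<open>The mean of sgn (S(p + e) - S(x)) for noise e with distribution function F
  (continuous, so that S(p + e) hits the level S(x) with probability zero).\<close>
definition mean_sgn_Sat :: "(real \<Rightarrow> real) \<Rightarrow> real \<Rightarrow> real \<Rightarrow> real \<Rightarrow> real \<Rightarrow> real \<Rightarrow> real \<Rightarrow> real" where
  "mean_sgn_Sat F L l u U p x =
    (if Sat L l u U x = L then 1 - F (l - p) else if Sat L l u U x = U then - F (u - p) else 1 - 2 * F (x - p))"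

lemma sgn_Sat_diff:
  fixes L l u U x z :: real
  assumes "L \<le> l" "l \<le> u" "u \<le> U" "\<not> (L = l \<and> l = u \<and> u = U)" "z \<noteq> l" "z \<noteq> u" "z \<noteq> x"
  shows "sgn (Sat L l u U z - Sat L l u U x) =
    (if Sat L l u U x = L then (if z \<le> l then 0 else 1)
     else if Sat L l u U x = U then (if z \<le> u then -1 else 0)
     else if z \<le> x then -1 else 1)"
  using assms by (auto simp: Sat_def sgn_if)

lemma borel_measurable_Sat[measurable (raw)]:
  fixes L l u U x :: "'a \<Rightarrow> real"
  assumes [measurable]: "L \<in> borel_measurable M" "l \<in> borel_measurable M" "u \<in> borel_measurable M"
    "U \<in> borel_measurable M" "x \<in> borel_measurable M"
  shows "(\<lambda>\<omega>. Sat (L \<omega>) (l \<omega>) (u \<omega>) (U \<omega>) (x \<omega>)) \<in> borel_measurable M"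
  unfolding Sat_def by measurable

lemma borel_measurable_corr:
  fixes L l u U x :: "'a \<Rightarrow> real" and Fc :: "'a \<Rightarrow> real \<Rightarrow> real"
  assumes [measurable]: "L \<in> borel_measurable M" "l \<in> borel_measurable M" "u \<in> borel_measurable M"
    "U \<in> borel_measurable M" "x \<in> borel_measurable M"
    "(\<lambda>\<omega>. Fc \<omega> (u \<omega> - x \<omega>)) \<in> borel_measurable M" "(\<lambda>\<omega>. Fc \<omega> (l \<omega> - x \<omega>)) \<in> borel_measurable M"
  shows "(\<lambda>\<omega>. corr (Fc \<omega>) (L \<omega>) (l \<omega>) (u \<omega>) (U \<omega>) (x \<omega>)) \<in> borel_measurable M"
  unfolding corr_def ind_def by measurable

lemma borel_measurable_beta2:
  fixes L l u U x xb :: "'a \<Rightarrow> real" and F f :: "'a \<Rightarrow> real \<Rightarrow> real"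
  assumes [measurable]: "L \<in> borel_measurable M" "l \<in> borel_measurable M" "u \<in> borel_measurable M"
    "U \<in> borel_measurable M" "x \<in> borel_measurable M" "xb \<in> borel_measurable M"
    and F: "\<And>Z. Z \<in> borel_measurable M \<Longrightarrow> (\<lambda>\<omega>. F \<omega> (Z \<omega>)) \<in> borel_measurable M"
    and f: "\<And>Z. Z \<in> borel_measurable M \<Longrightarrow> (\<lambda>\<omega>. f \<omega> (Z \<omega>)) \<in> borel_measurable M"
  shows "(\<lambda>\<omega>. beta2 (F \<omega>) (f \<omega>) (L \<omega>) (l \<omega>) (u \<omega>) (U \<omega>) (x \<omega>) (xb \<omega>)) \<in> borel_measurable M"
proof -
  have [measurable]: "(\<lambda>\<omega>. F \<omega> (l \<omega> - x \<omega>)) \<in> borel_measurable M" "(\<lambda>\<omega>. F \<omega> (l \<omega> - xb \<omega>)) \<in> borel_measurable M"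
    "(\<lambda>\<omega>. F \<omega> (u \<omega> - x \<omega>)) \<in> borel_measurable M" "(\<lambda>\<omega>. F \<omega> (u \<omega> - xb \<omega>)) \<in> borel_measurable M"
    "(\<lambda>\<omega>. F \<omega> (x \<omega> - xb \<omega>)) \<in> borel_measurable M" "(\<lambda>\<omega>. f \<omega> (l \<omega> - x \<omega>)) \<in> borel_measurable M"
    "(\<lambda>\<omega>. f \<omega> (u \<omega> - x \<omega>)) \<in> borel_measurable M" "(\<lambda>\<omega>. f \<omega> 0) \<in> borel_measurable M"
    by (rule F f; measurable)+
  show ?thesis unfolding beta2_def Let_def Sat_def by measurable
qed

lemma increment_difference_quotient_bound:
  fixes F f :: "real \<Rightarrow> real"
  assumes F_increment: "\<And>a b. -R \<le> a \<Longrightarrow> a \<le> b \<Longrightarrow> b \<le> R \<Longrightarrow> 0 \<le> F b - F a \<and> F b - F a \<le> c * (b - a)"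
    and f_bound: "\<And>y. \<bar>y\<bar> \<le> R \<Longrightarrow> \<bar>f y\<bar> \<le> c"
    and args: "\<bar>c0\<bar> \<le> R" "\<bar>c0 - t\<bar> \<le> R" "\<bar>c0 - d\<bar> \<le> R"
    and \<alpha>: "\<bar>\<alpha>\<bar> \<le> 2"
  shows "\<bar>\<alpha> * (F c0 - F (c0 - t)) - (if d \<noteq> 0 then \<alpha> * (F c0 - F (c0 - d)) / d else \<alpha> * f c0) * t\<bar> \<le> 4 * c * \<bar>t - d\<bar>"
proof -
  have F_lipschitz: "\<bar>F a - F b\<bar> \<le> c * \<bar>a - b\<bar>" if "\<bar>a\<bar> \<le> R" "\<bar>b\<bar> \<le> R" for a b
  proof (cases "a \<le> b")
    case True
    have "-R \<le> a" "b \<le> R" using that by auto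
    from F_increment[OF this(1) True this(2)] True show ?thesis by (simp add: abs_if)
  next
    case False
    have "-R \<le> b" "a \<le> R" "b \<le> a" using that False by auto
    from F_increment[OF this(1) this(3) this(2)] False show ?thesis by (simp add: abs_if)
  qed
  have c_nonneg: "c \<ge> 0" using f_bound[of c0] args by auto
  define G where "G s = F c0 - F (c0 - s)" for s
  have Gt: "\<bar>G t - G d\<bar> \<le> c * \<bar>t - d\<bar>" unfolding G_def using F_lipschitz[OF args(3) args(2)] by (simp add: abs_minus_commute)
  have Gd: "\<bar>G d\<bar> \<le> c * \<bar>d\<bar>" unfolding G_def using F_lipschitz[OF args(1) args(3)] by simp
  have Gt0: "\<bar>G t\<bar> \<le> c * \<bar>t\<bar>" unfolding G_def using F_lipschitz[OF args(1) args(2)] by simp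
  show ?thesis
  proof (cases "d = 0")
    case False
    define q where "q = G d / d"
    have id: "\<alpha> * G t - \<alpha> * G d / d * t = \<alpha> * (G t - G d) + \<alpha> * q * (d - t)"
      unfolding q_def using False by (simp add: field_simps)
    have b1: "\<bar>\<alpha> * (G t - G d)\<bar> \<le> 2 * (c * \<bar>t - d\<bar>)"
      by (simp add: abs_mult) (rule mult_mono[OF \<alpha> Gt]; simp)
    have qb: "\<bar>q\<bar> \<le> c" unfolding q_def using Gd False by (simp add: abs_divide divide_le_eq)
    then have "\<bar>\<alpha>\<bar> * \<bar>q\<bar> \<le> 2 * c" by (rule mult_mono[OF \<alpha>]) (simp_all add: c_nonneg)
    then have "\<bar>\<alpha>\<bar> * \<bar>q\<bar> * \<bar>t - d\<bar> \<le> 2 * c * \<bar>t - d\<bar>" by (rule mult_right_mono) simp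
    moreover have "\<bar>\<alpha> * q * (d - t)\<bar> = \<bar>\<alpha>\<bar> * \<bar>q\<bar> * \<bar>t - d\<bar>"
      by (simp only: abs_mult abs_minus_commute[of d t])
    ultimately have b2: "\<bar>\<alpha> * q * (d - t)\<bar> \<le> 2 * c * \<bar>t - d\<bar>" by simp
    have "\<bar>\<alpha> * G t - \<alpha> * G d / d * t\<bar> \<le> \<bar>\<alpha> * (G t - G d)\<bar> + \<bar>\<alpha> * q * (d - t)\<bar>"
      unfolding id by (rule abs_triangle_ineq)
    then have "\<bar>\<alpha> * G t - \<alpha> * G d / d * t\<bar> \<le> 4 * c * \<bar>t - d\<bar>" using b1 b2 by linarith
    then show ?thesis using False by (simp add: G_def)
  next
    case True
    have f0: "\<bar>f c0\<bar> \<le> c" using f_bound args(1) by simp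
    have "\<bar>\<alpha> * G t\<bar> \<le> 2 * (c * \<bar>t\<bar>)" by (simp add: abs_mult) (rule mult_mono[OF \<alpha> Gt0]; simp)
    moreover have "\<bar>\<alpha> * f c0 * t\<bar> \<le> 2 * c * \<bar>t\<bar>"
      by (simp add: abs_mult) (intro mult_mono mult_mono[OF \<alpha> f0]; simp add: c_nonneg)
    ultimately show ?thesis using True by (simp add: G_def)
  qed
qed

lemma sign_innovation_linearization_bound:
  fixes F f :: "real \<Rightarrow> real" and L l u U p x xb C Mc R c :: real
  assumes F_lipschitz: "\<And>a b. - R \<le> a \<Longrightarrow> a \<le> b \<Longrightarrow> b \<le> R \<Longrightarrow> 0 \<le> F b - F a \<and> F b - F a \<le> c * (b - a)"
    and f_bound: "\<And>y. \<bar>y\<bar> \<le> R \<Longrightarrow> \<bar>f y\<bar> \<le> c"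
    and F_median: "F 0 = 1/2"
    and order: "L \<le> l" "l \<le> u" "u \<le> U" "\<not> (L = l \<and> l = u \<and> u = U)"
    and bounds: "\<bar>p\<bar> \<le> C" "\<bar>x\<bar> \<le> C" "\<bar>xb\<bar> \<le> C" "l \<le> Mc" "- u \<le> Mc" "2 * C \<le> R" "C + Mc \<le> R"
  shows "\<bar>mean_sgn_Sat F L l u U p x + corr F L l u U x - beta2 F f L l u U x xb * (p - x)\<bar> \<le> 4 * c * \<bar>p - xb\<bar>"
proof -
  have increment_bound: "\<bar>\<alpha> * (F c0 - F (c0 - (p - x))) - (if xb - x \<noteq> 0 then \<alpha> * (F c0 - F (c0 - (xb - x))) / (xb - x) else \<alpha> * f c0) * (p - x)\<bar>
      \<le> 4 * c * \<bar>p - xb\<bar>"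
    if "\<bar>c0\<bar> \<le> R" "\<bar>c0 - (p - x)\<bar> \<le> R" "\<bar>c0 - (xb - x)\<bar> \<le> R" "\<bar>\<alpha>\<bar> \<le> 2" for c0 \<alpha>
    using increment_difference_quotient_bound[of R F c f c0 "p - x" "xb - x" \<alpha>, OF F_lipschitz f_bound that] by simp
  consider (cL) "Sat L l u U x = L" | (cU) "Sat L l u U x \<noteq> L" "Sat L l u U x = U"
    | (cM) "Sat L l u U x \<noteq> L" "Sat L l u U x \<noteq> U" by blast
  then show ?thesis
  proof cases
    case cL
    have nU: "Sat L l u U x \<noteq> U" using cL order by (auto simp: Sat_def split: if_splits)
    have xl: "x \<le> l" using cL order by (auto simp: Sat_def split: if_splits)
    have bound: "\<bar>1 * (F (l - x) - F (l - x - (p - x))) - (if xb - x \<noteq> 0 then 1 * (F (l - x) - F (l - x - (xb - x))) / (xb - x) else 1 * f (l - x)) * (p - x)\<bar>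
      \<le> 4 * c * \<bar>p - xb\<bar>"
      by (rule increment_bound) (use xl bounds in auto)
    have e: "l - x - (p - x) = l - p" "l - x - (xb - x) = l - xb" by simp_all
    show ?thesis using bound cL nU unfolding e by (cases "xb = x") (simp_all add: mean_sgn_Sat_def corr_def ind_def beta2_def Let_def)
  next
    case cU
    have xu: "u \<le> x" using cU order by (auto simp: Sat_def split: if_splits)
    have bound: "\<bar>1 * (F (u - x) - F (u - x - (p - x))) - (if xb - x \<noteq> 0 then 1 * (F (u - x) - F (u - x - (xb - x))) / (xb - x) else 1 * f (u - x)) * (p - x)\<bar>
      \<le> 4 * c * \<bar>p - xb\<bar>"
      by (rule increment_bound) (use xu bounds in auto)
    have e: "u - x - (p - x) = u - p" "u - x - (xb - x) = u - xb" by simp_all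
    show ?thesis using bound cU unfolding e by (cases "xb = x") (simp_all add: mean_sgn_Sat_def corr_def ind_def beta2_def Let_def)
  next
    case cM
    have LU: "L < Sat L l u U x" "Sat L l u U x < U" using cM order by (auto simp: Sat_def split: if_splits)
    have bound: "\<bar>2 * (F 0 - F (0 - (p - x))) - (if xb - x \<noteq> 0 then 2 * (F 0 - F (0 - (xb - x))) / (xb - x) else 2 * f 0) * (p - x)\<bar>
      \<le> 4 * c * \<bar>p - xb\<bar>"
      by (rule increment_bound) (use bounds in auto)
    have e: "0 - (p - x) = x - p" "0 - (xb - x) = x - xb" by simp_all
    show ?thesis using bound cM LU unfolding e F_median by (cases "xb = x") (simp_all add: mean_sgn_Sat_def corr_def ind_def beta2_def Let_def algebra_simps)
  qed
qed

lemma mono_difference_quotient_nonneg: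
  assumes "mono (F::real\<Rightarrow>real)" "d \<noteq> 0"
  shows "0 \<le> (F c - F (c - d)) / d"
proof (cases "d > 0")
  case True
  then have "F (c - d) \<le> F c" using assms(1) by (auto simp: mono_def)
  then show ?thesis using True by simp
next
  case False
  then have "d < 0" using assms(2) by simp
  then have "F c \<le> F (c - d)" using assms(1) by (auto simp: mono_def)
  then show ?thesis using \<open>d < 0\<close> by (simp add: divide_nonpos_neg)
qed

lemma beta2_nonneg:
  assumes "mono F" "\<And>y. 0 \<le> f y" "F 0 = 1/2"
  shows "0 \<le> beta2 F f L l u U x xb"
proof -
  have a: "0 \<le> (F (l - x) - F (l - xb)) / (xb - x)" if "xb - x \<noteq> 0"
    using mono_difference_quotient_nonneg[OF assms(1) that, of "l - x"] by simp
  have b: "0 \<le> (F (u - x) - F (u - xb)) / (xb - x)" if "xb - x \<noteq> 0"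
    using mono_difference_quotient_nonneg[OF assms(1) that, of "u - x"] by simp
  have c: "0 \<le> (1 - 2 * F (x - xb)) / (xb - x)" if "xb - x \<noteq> 0"
  proof -
    have "0 \<le> (F 0 - F (0 - (xb - x))) / (xb - x)" by (rule mono_difference_quotient_nonneg[OF assms(1) that])
    then have h: "0 \<le> 2 * ((F 0 - F (0 - (xb - x))) / (xb - x))" by (intro mult_nonneg_nonneg) simp_all
    have e: "1 - 2 * F (x - xb) = 2 * (F 0 - F (0 - (xb - x)))" using assms(3) by simp
    show ?thesis using h unfolding e by (simp add: times_divide_eq_right)
  qed
  show ?thesis unfolding beta2_def Let_def using a b c assms(2) by auto
qed

section \<open>Conditional distribution functions\<close>

lemma (in finite_measure) integral_eq_of_bounded_limits:
  fixes f g :: "nat \<Rightarrow> 'a \<Rightarrow> real"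
  assumes [measurable]: "\<And>n. f n \<in> borel_measurable M" "f' \<in> borel_measurable M"
    "\<And>n. g n \<in> borel_measurable M" "g' \<in> borel_measurable M"
    and "\<And>\<omega>. \<omega> \<in> space M \<Longrightarrow> (\<lambda>n. f n \<omega>) \<longlonglongrightarrow> f' \<omega>"
    and "\<And>\<omega>. \<omega> \<in> space M \<Longrightarrow> (\<lambda>n. g n \<omega>) \<longlonglongrightarrow> g' \<omega>"
    and "\<And>n \<omega>. \<omega> \<in> space M \<Longrightarrow> \<bar>f n \<omega>\<bar> \<le> 1" "\<And>n \<omega>. \<omega> \<in> space M \<Longrightarrow> \<bar>g n \<omega>\<bar> \<le> 1"
    and "\<And>n. integral\<^sup>L M (f n) = integral\<^sup>L M (g n)"
  shows "integral\<^sup>L M f' = integral\<^sup>L M g'"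
proof -
  have "(\<lambda>n. integral\<^sup>L M (f n)) \<longlonglongrightarrow> integral\<^sup>L M f'" "(\<lambda>n. integral\<^sup>L M (g n)) \<longlonglongrightarrow> integral\<^sup>L M g'"
    by (rule integral_dominated_convergence[where w="\<lambda>_. 1"]; use assms in auto)+
  then show ?thesis using assms(9) LIMSEQ_unique by auto
qed

lemma integral_indicator_space:
  fixes f :: "'a \<Rightarrow> real"
  shows "(\<integral>\<omega>. indicator (space M) \<omega> * f \<omega> \<partial>M) = integral\<^sup>L M f"
  by (rule Bochner_Integration.integral_cong) auto

locale cond_cdf = finite_measure_subalgebra M G for M :: "'a measure" and G +
  fixes e :: "'a \<Rightarrow> real" and Fc :: "'a \<Rightarrow> real \<Rightarrow> real"
  assumes e_measurable[measurable]: "e \<in> borel_measurable M"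
    and cdf_cond_exp: "\<And>c. AE \<omega> in M. Fc \<omega> c = real_cond_exp M G (indicator {\<omega>\<in>space M. e \<omega> \<le> c}) \<omega>"
    and cdf_measurable: "\<And>c. (\<lambda>\<omega>. Fc \<omega> c) \<in> borel_measurable G"
    and cdf_bounds: "\<And>\<omega> c. \<omega> \<in> space M \<Longrightarrow> 0 \<le> Fc \<omega> c \<and> Fc \<omega> c \<le> 1"
    and cdf_continuous: "\<And>\<omega> c. \<omega> \<in> space M \<Longrightarrow> isCont (Fc \<omega>) c"
begin

lemma space_G: "space G = space M"
  using subalg by (simp add: subalgebra_def)

lemma sets_G_sets_M: "A \<in> sets G \<Longrightarrow> A \<in> sets M"
  using subalg by (meson subalgebra_def subsetD)

lemma measurable_G_M: "f \<in> borel_measurable G \<Longrightarrow> f \<in> borel_measurable M"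
  using measurable_from_subalg[OF subalg] .

lemma cdf_at_measurable: "Z \<in> borel_measurable G \<Longrightarrow> (\<lambda>\<omega>. Fc \<omega> (Z \<omega>)) \<in> borel_measurable G"
  by (rule measurable_Caratheodory[OF cdf_measurable]) (use cdf_continuous space_G in auto)

lemma integrable_bounded:
  fixes f :: "'a \<Rightarrow> real"
  shows "f \<in> borel_measurable M \<Longrightarrow> (\<And>\<omega>. \<omega> \<in> space M \<Longrightarrow> \<bar>f \<omega>\<bar> \<le> B) \<Longrightarrow> integrable M f"
  by (rule integrable_const_bound[where B=B]) auto

lemma integral_indicator_le_const:
  assumes A: "A \<in> sets G"
  shows "(\<integral>\<omega>. indicator A \<omega> * indicator {\<omega>\<in>space M. e \<omega> \<le> c} \<omega> \<partial>M) = (\<integral>\<omega>. indicator A \<omega> * Fc \<omega> c \<partial>M)"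
proof -
  have [measurable]: "A \<in> sets M" "(\<lambda>\<omega>. Fc \<omega> c) \<in> borel_measurable M"
    using sets_G_sets_M[OF A] measurable_G_M[OF cdf_measurable] by auto
  have int: "integrable M (indicator {\<omega>\<in>space M. e \<omega> \<le> c} :: _ \<Rightarrow> real)"
    by (rule integrable_bounded[where B=1]) auto
  have "(\<integral>\<omega>. indicator A \<omega> * indicator {\<omega>\<in>space M. e \<omega> \<le> c} \<omega> \<partial>M)
      = (\<integral>\<omega>\<in>A. real_cond_exp M G (indicator {\<omega>\<in>space M. e \<omega> \<le> c}) \<omega> \<partial>M)"
    using real_cond_exp_intA[OF int A] by (simp add: set_lebesgue_integral_def)
  also have "\<dots> = (\<integral>\<omega>. indicator A \<omega> * Fc \<omega> c \<partial>M)"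
    unfolding set_lebesgue_integral_def using cdf_cond_exp[of c]
    by (intro integral_cong_AE) (auto elim!: eventually_mono)
  finally show ?thesis .
qed

lemma integral_indicator_le_finite_range:
  assumes Z[measurable]: "Z \<in> borel_measurable G" and V: "finite (Z ` space M)" and A: "A \<in> sets G"
  shows "(\<integral>\<omega>. indicator A \<omega> * indicator {\<omega>\<in>space M. e \<omega> \<le> Z \<omega>} \<omega> \<partial>M)
       = (\<integral>\<omega>. indicator A \<omega> * Fc \<omega> (Z \<omega>) \<partial>M)"
proof -
  define B where "B v = A \<inter> {\<omega>\<in>space M. Z \<omega> = v}" for v
  have B: "B v \<in> sets G" for v
  proof -
    have "{\<omega>\<in>space G. Z \<omega> = v} \<in> sets G" by measurable
    then show ?thesis unfolding B_def space_G by (rule sets.Int[OF A])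
  qed
  then have [measurable]: "B v \<in> sets M" for v by (rule sets_G_sets_M)
  have [measurable]: "(\<lambda>\<omega>. Fc \<omega> v) \<in> borel_measurable M" for v
    using measurable_G_M[OF cdf_measurable] .
  have split: "indicator A \<omega> * k \<omega> (Z \<omega>) = (\<Sum>v\<in>Z ` space M. indicator (B v) \<omega> * k \<omega> v)"
    if "\<omega> \<in> space M" for \<omega> and k :: "'a \<Rightarrow> real \<Rightarrow> real"
    using that V by (simp add: B_def indicator_def if_distrib[of "\<lambda>c. c * _"] sum.delta cong: if_cong)
  have "(\<integral>\<omega>. indicator A \<omega> * indicator {\<omega>\<in>space M. e \<omega> \<le> Z \<omega>} \<omega> \<partial>M)
      = (\<integral>\<omega>. (\<Sum>v\<in>Z ` space M. (indicator (B v) \<omega> :: real) * indicator {\<omega>\<in>space M. e \<omega> \<le> v} \<omega>) \<partial>M)"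
  proof (rule Bochner_Integration.integral_cong)
    fix \<omega> assume \<omega>: "\<omega> \<in> space M"
    have "indicator A \<omega> * indicator {\<omega>\<in>space M. e \<omega> \<le> Z \<omega>} \<omega>
        = (indicator A \<omega> :: real) * indicator {\<omega>'\<in>space M. e \<omega>' \<le> Z \<omega>} \<omega>"
      using \<omega> by (simp add: indicator_def)
    also have "\<dots> = (\<Sum>v\<in>Z ` space M. indicator (B v) \<omega> * indicator {\<omega>\<in>space M. e \<omega> \<le> v} \<omega>)"
      by (rule split[OF \<omega>])
    finally show "(indicator A \<omega> :: real) * indicator {\<omega>\<in>space M. e \<omega> \<le> Z \<omega>} \<omega>
        = (\<Sum>v\<in>Z ` space M. indicator (B v) \<omega> * indicator {\<omega>\<in>space M. e \<omega> \<le> v} \<omega>)" .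
  qed simp
  also have "\<dots> = (\<Sum>v\<in>Z ` space M. \<integral>\<omega>. indicator (B v) \<omega> * indicator {\<omega>\<in>space M. e \<omega> \<le> v} \<omega> \<partial>M)"
    by (intro Bochner_Integration.integral_sum integrable_bounded[where B=1]) (auto simp: indicator_def)
  also have "\<dots> = (\<Sum>v\<in>Z ` space M. \<integral>\<omega>. indicator (B v) \<omega> * Fc \<omega> v \<partial>M)"
    by (intro sum.cong refl integral_indicator_le_const B)
  also have "\<dots> = (\<integral>\<omega>. (\<Sum>v\<in>Z ` space M. indicator (B v) \<omega> * Fc \<omega> v) \<partial>M)"
    using cdf_bounds
    by (intro Bochner_Integration.integral_sum[symmetric] integrable_bounded[where B=1])
      (auto simp: indicator_def)
  also have "\<dots> = (\<integral>\<omega>. indicator A \<omega> * Fc \<omega> (Z \<omega>) \<partial>M)"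
    using split[where k=Fc] by (intro Bochner_Integration.integral_cong) auto
  finally show ?thesis .
qed

lemma integral_indicator_le:
  assumes Z[measurable]: "Z \<in> borel_measurable G" and A: "A \<in> sets G"
  shows "(\<integral>\<omega>. indicator A \<omega> * indicator {\<omega>\<in>space M. e \<omega> \<le> Z \<omega>} \<omega> \<partial>M)
       = (\<integral>\<omega>. indicator A \<omega> * Fc \<omega> (Z \<omega>) \<partial>M)"
proof -
  define Zn where "Zn n \<omega> = dyadic_ceiling n (Z \<omega>)" for n \<omega>
  have [measurable]: "Zn n \<in> borel_measurable G" for n unfolding Zn_def by measurable
  have [measurable]: "A \<in> sets M" "Z \<in> borel_measurable M" "Zn n \<in> borel_measurable M"
    "(\<lambda>\<omega>. Fc \<omega> (Z \<omega>)) \<in> borel_measurable M" "(\<lambda>\<omega>. Fc \<omega> (Zn n \<omega>)) \<in> borel_measurable M" for n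
    using A by (auto intro: sets_G_sets_M measurable_G_M cdf_at_measurable[THEN measurable_G_M])
  have Zn_tendsto: "(\<lambda>n. Zn n \<omega>) \<longlonglongrightarrow> Z \<omega>" for \<omega>
    unfolding Zn_def by (rule dyadic_ceiling_tendsto)
  show ?thesis
  proof (rule integral_eq_of_bounded_limits)
    show "(\<lambda>n. indicator A \<omega> * indicator {\<omega>\<in>space M. e \<omega> \<le> Zn n \<omega>} \<omega>) \<longlonglongrightarrow>
        (indicator A \<omega> * indicator {\<omega>\<in>space M. e \<omega> \<le> Z \<omega>} \<omega> :: real)" if "\<omega> \<in> space M" for \<omega>
    proof (cases "e \<omega> \<le> Z \<omega>")
      case True
      then have "eventually (\<lambda>n. e \<omega> \<le> Zn n \<omega>) sequentially"
        using dyadic_ceiling_eventually_ge[of "Z \<omega>"] unfolding Zn_def by (auto elim: eventually_mono)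
      then show ?thesis using True that by (intro tendsto_eventually, elim eventually_mono) (simp add: indicator_def)
    next
      case False
      then have "eventually (\<lambda>n. Zn n \<omega> < e \<omega>) sequentially"
        using order_tendstoD(2)[OF Zn_tendsto[of \<omega>]] by auto
      then show ?thesis using False that by (intro tendsto_eventually, elim eventually_mono) (simp add: indicator_def)
    qed
    show "(\<lambda>n. indicator A \<omega> * Fc \<omega> (Zn n \<omega>)) \<longlonglongrightarrow> indicator A \<omega> * Fc \<omega> (Z \<omega>)" if "\<omega> \<in> space M" for \<omega>
      by (intro tendsto_mult tendsto_const isCont_tendsto_compose[OF cdf_continuous[OF that] Zn_tendsto])
    show "\<bar>indicator A \<omega> * Fc \<omega> (Zn n \<omega>)\<bar> \<le> 1" if "\<omega> \<in> space M" for n \<omega>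
      using cdf_bounds[OF that] by (auto simp: indicator_def)
    show "(\<integral>\<omega>. indicator A \<omega> * indicator {\<omega>\<in>space M. e \<omega> \<le> Zn n \<omega>} \<omega> \<partial>M)
        = (\<integral>\<omega>. indicator A \<omega> * Fc \<omega> (Zn n \<omega>) \<partial>M)" for n
    proof (rule integral_indicator_le_finite_range[OF _ _ A])
      show "finite (Zn n ` space M)"
        by (rule finite_subset[OF _ finite_range_dyadic_ceiling[of n]]) (auto simp: Zn_def)
    qed measurable
  qed (auto simp: indicator_def)
qed

lemma integral_indicator_less:
  assumes Z[measurable]: "Z \<in> borel_measurable G"
  shows "(\<integral>\<omega>. indicator {\<omega>\<in>space M. e \<omega> < Z \<omega>} \<omega> \<partial>M) = (\<integral>\<omega>. Fc \<omega> (Z \<omega>) \<partial>M)"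
proof -
  define Zn where "Zn n \<omega> = Z \<omega> - 1 / real (Suc n)" for n \<omega>
  have [measurable]: "Zn n \<in> borel_measurable G" for n unfolding Zn_def by measurable
  have [measurable]: "Z \<in> borel_measurable M" "Zn n \<in> borel_measurable M"
    "(\<lambda>\<omega>. Fc \<omega> (Z \<omega>)) \<in> borel_measurable M" "(\<lambda>\<omega>. Fc \<omega> (Zn n \<omega>)) \<in> borel_measurable M" for n
    by (auto intro: measurable_G_M cdf_at_measurable[THEN measurable_G_M])
  have Zn_tendsto: "(\<lambda>n. Zn n \<omega>) \<longlonglongrightarrow> Z \<omega>" for \<omega>
    unfolding Zn_def using tendsto_diff[OF tendsto_const[of "Z \<omega>"] LIMSEQ_Suc[OF lim_1_over_n]] by simp
  show ?thesis
  proof (rule integral_eq_of_bounded_limits)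
    show "(\<lambda>n. indicator {\<omega>\<in>space M. e \<omega> \<le> Zn n \<omega>} \<omega>) \<longlonglongrightarrow>
        (indicator {\<omega>\<in>space M. e \<omega> < Z \<omega>} \<omega> :: real)" if "\<omega> \<in> space M" for \<omega>
    proof (cases "e \<omega> < Z \<omega>")
      case True
      then have "eventually (\<lambda>n. e \<omega> < Zn n \<omega>) sequentially"
        using order_tendstoD(1)[OF Zn_tendsto[of \<omega>]] by auto
      then show ?thesis using True that by (intro tendsto_eventually, elim eventually_mono) (simp add: indicator_def)
    next
      case False
      have "0 < 1 / real (Suc n)" for n by simp
      have "Zn n \<omega> < e \<omega>" for n
        using False \<open>0 < 1 / real (Suc n)\<close> unfolding Zn_def by linarith
      then show ?thesis using False that by (intro tendsto_eventually) (auto simp: not_le)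
    qed
    show "(\<lambda>n. Fc \<omega> (Zn n \<omega>)) \<longlonglongrightarrow> Fc \<omega> (Z \<omega>)" if "\<omega> \<in> space M" for \<omega>
      by (rule isCont_tendsto_compose[OF cdf_continuous[OF that] Zn_tendsto])
    show "\<bar>Fc \<omega> (Zn n \<omega>)\<bar> \<le> 1" if "\<omega> \<in> space M" for n \<omega>
      using cdf_bounds[OF that] by auto
    show "(\<integral>\<omega>. indicator {\<omega>\<in>space M. e \<omega> \<le> Zn n \<omega>} \<omega> \<partial>M) = (\<integral>\<omega>. Fc \<omega> (Zn n \<omega>) \<partial>M)" for n
      using integral_indicator_le[OF _ sets.top, of "Zn n"] by (simp add: space_G integral_indicator_space)
  qed (auto simp: indicator_def)
qed

lemma AE_neq_level:
  assumes Z[measurable]: "Z \<in> borel_measurable G"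
  shows "AE \<omega> in M. e \<omega> \<noteq> Z \<omega>"
proof -
  have [measurable]: "Z \<in> borel_measurable M" by (rule measurable_G_M[OF Z])
  let ?atom = "indicator {\<omega>\<in>space M. e \<omega> = Z \<omega>} :: 'a \<Rightarrow> real"
  have atom: "?atom = (\<lambda>\<omega>. indicator {\<omega>\<in>space M. e \<omega> \<le> Z \<omega>} \<omega> - indicator {\<omega>\<in>space M. e \<omega> < Z \<omega>} \<omega>)"
    by (auto simp: fun_eq_iff indicator_def)
  have same: "(\<integral>\<omega>. indicator {\<omega>\<in>space M. e \<omega> \<le> Z \<omega>} \<omega> \<partial>M)
      = (\<integral>\<omega>. indicator {\<omega>\<in>space M. e \<omega> < Z \<omega>} \<omega> \<partial>M :: real)"
    using integral_indicator_le[OF Z sets.top] integral_indicator_less[OF Z]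
    by (simp only: space_G integral_indicator_space)
  have "integral\<^sup>L M ?atom = 0"
    unfolding atom by (subst Bochner_Integration.integral_diff) (use same in \<open>auto intro!: integrable_bounded[where B=1]\<close>)
  then have "AE \<omega> in M. ?atom \<omega> = 0"
    by (subst integral_nonneg_eq_0_iff_AE[symmetric]) (auto intro: integrable_bounded[where B=1])
  then show ?thesis by (auto elim!: eventually_mono simp: indicator_def)
qed

lemma integral_centered_indicator_le:
  assumes Z[measurable]: "Z \<in> borel_measurable G" and B: "B \<in> sets G"
  defines "h \<equiv> \<lambda>\<omega>. indicator B \<omega> * (indicator {\<omega>\<in>space M. e \<omega> \<le> Z \<omega>} \<omega> - Fc \<omega> (Z \<omega>))"
  shows "integrable M h" "integral\<^sup>L M h = 0"
proof -
  have [measurable]: "B \<in> sets M" "Z \<in> borel_measurable M" "(\<lambda>\<omega>. Fc \<omega> (Z \<omega>)) \<in> borel_measurable M"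
    using B by (auto intro: sets_G_sets_M measurable_G_M cdf_at_measurable[THEN measurable_G_M])
  have int: "integrable M (\<lambda>\<omega>. indicator B \<omega> * indicator {\<omega>\<in>space M. e \<omega> \<le> Z \<omega>} \<omega> :: real)"
    "integrable M (\<lambda>\<omega>. indicator B \<omega> * Fc \<omega> (Z \<omega>))"
    using cdf_bounds by (auto intro!: integrable_bounded[where B=1] simp: indicator_def)
  show "integrable M h" unfolding h_def right_diff_distrib using int by simp
  show "integral\<^sup>L M h = 0"
    unfolding h_def right_diff_distrib using int integral_indicator_le[OF Z B] by simp
qed

lemma cond_exp_sgn_Sat:
  fixes p x y L l u U :: "'a \<Rightarrow> real"
  assumes [measurable]: "p \<in> borel_measurable G" "x \<in> borel_measurable G"
    "L \<in> borel_measurable G" "l \<in> borel_measurable G" "u \<in> borel_measurable G" "U \<in> borel_measurable G"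
    and order: "AE \<omega> in M. L \<omega> \<le> l \<omega> \<and> l \<omega> \<le> u \<omega> \<and> u \<omega> \<le> U \<omega> \<and> \<not> (L \<omega> = l \<omega> \<and> l \<omega> = u \<omega> \<and> u \<omega> = U \<omega>)"
    and y: "\<And>\<omega>. \<omega> \<in> space M \<Longrightarrow> y \<omega> = Sat (L \<omega>) (l \<omega>) (u \<omega>) (U \<omega>) (p \<omega> + e \<omega>)"
  shows "AE \<omega> in M. real_cond_exp M G (\<lambda>\<omega>. sgn (y \<omega> - Sat (L \<omega>) (l \<omega>) (u \<omega>) (U \<omega>) (x \<omega>))) \<omega>
      = mean_sgn_Sat (Fc \<omega>) (L \<omega>) (l \<omega>) (u \<omega>) (U \<omega>) (p \<omega>) (x \<omega>)"
    (is "AE \<omega> in M. real_cond_exp M G ?f \<omega> = ?g \<omega>")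
proof -
  define s where "s \<omega> = Sat (L \<omega>) (l \<omega>) (u \<omega>) (U \<omega>) (x \<omega>)" for \<omega>
  define aL aU aM where aL_def: "aL \<omega> = l \<omega> - p \<omega>" and aU_def: "aU \<omega> = u \<omega> - p \<omega>"
    and aM_def: "aM \<omega> = x \<omega> - p \<omega>" for \<omega>
  define SL SU SM where SL_def: "SL = {\<omega>\<in>space G. s \<omega> = L \<omega>}"
    and SU_def: "SU = {\<omega>\<in>space G. s \<omega> \<noteq> L \<omega> \<and> s \<omega> = U \<omega>}"
    and SM_def: "SM = {\<omega>\<in>space G. s \<omega> \<noteq> L \<omega> \<and> s \<omega> \<noteq> U \<omega>}"
  define I :: "('a \<Rightarrow> real) \<Rightarrow> 'a \<Rightarrow> real" where "I a = indicator {\<omega>\<in>space M. e \<omega> \<le> a \<omega>}" for a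
  define g where "g \<omega> = ?g \<omega>" for \<omega>
  define h where "h \<omega> = indicator SL \<omega> * (1 - I aL \<omega>) - indicator SU \<omega> * I aU \<omega> + indicator SM \<omega> * (1 - 2 * I aM \<omega>)" for \<omega>
  have a_G[measurable]: "s \<in> borel_measurable G" "aL \<in> borel_measurable G" "aU \<in> borel_measurable G" "aM \<in> borel_measurable G"
    unfolding s_def aL_def aU_def aM_def Sat_def by measurable
  have S_G[measurable]: "SL \<in> sets G" "SU \<in> sets G" "SM \<in> sets G"
    unfolding SL_def SU_def SM_def by measurable
  have G_M[measurable]: "SL \<in> sets M" "SU \<in> sets M" "SM \<in> sets M" "p \<in> borel_measurable M" "x \<in> borel_measurable M"
    "L \<in> borel_measurable M" "l \<in> borel_measurable M" "u \<in> borel_measurable M" "U \<in> borel_measurable M"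
    "aL \<in> borel_measurable M" "aU \<in> borel_measurable M" "aM \<in> borel_measurable M"
    "(\<lambda>\<omega>. Fc \<omega> (aL \<omega>)) \<in> borel_measurable M" "(\<lambda>\<omega>. Fc \<omega> (aU \<omega>)) \<in> borel_measurable M"
    "(\<lambda>\<omega>. Fc \<omega> (aM \<omega>)) \<in> borel_measurable M"
    by (auto intro!: sets_G_sets_M measurable_G_M cdf_at_measurable S_G)
  have g_G: "g \<in> borel_measurable G"
    using cdf_at_measurable[of aL] cdf_at_measurable[of aU] cdf_at_measurable[of aM]
    unfolding g_def mean_sgn_Sat_def aL_def aU_def aM_def Sat_def by measurable
  have g_bound: "\<bar>g \<omega>\<bar> \<le> 1" if "\<omega> \<in> space M" for \<omega>
    using cdf_bounds[OF that, of "l \<omega> - p \<omega>"] cdf_bounds[OF that, of "u \<omega> - p \<omega>"]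
      cdf_bounds[OF that, of "x \<omega> - p \<omega>"] by (auto simp: g_def mean_sgn_Sat_def)
  have f_M: "?f \<in> borel_measurable M"
  proof (subst measurable_cong)
    show "(\<lambda>\<omega>. sgn (Sat (L \<omega>) (l \<omega>) (u \<omega>) (U \<omega>) (p \<omega> + e \<omega>) - s \<omega>)) \<in> borel_measurable M"
      unfolding s_def Sat_def by measurable
  qed (simp add: y s_def)
  have f_eq_h: "AE \<omega> in M. ?f \<omega> = h \<omega>"
    using order AE_neq_level[OF a_G(2)] AE_neq_level[OF a_G(3)] AE_neq_level[OF a_G(4)] AE_space
  proof eventually_elim
    case (elim \<omega>)
    then show ?case
      by (subst y, simp, subst sgn_Sat_diff) (auto simp: h_def I_def SL_def SU_def SM_def s_def aL_def aU_def aM_def space_G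
          indicator_def)
  qed
  have "(\<integral>\<omega>. indicator A \<omega> * h \<omega> \<partial>M) = (\<integral>\<omega>. indicator A \<omega> * g \<omega> \<partial>M)" if A: "A \<in> sets G" for A
  proof -
    define c where "c B a \<omega> = indicator B \<omega> * (I a \<omega> - Fc \<omega> (a \<omega>))" for B a \<omega>
    have c: "integrable M (c (A \<inter> S) a)" "integral\<^sup>L M (c (A \<inter> S) a) = 0"
      if "S \<in> sets G" "a \<in> borel_measurable G" for S a
      unfolding c_def I_def using integral_centered_indicator_le[OF that(2) sets.Int[OF A that(1)]] by auto
    have "(\<integral>\<omega>. indicator A \<omega> * h \<omega> \<partial>M)
      = (\<integral>\<omega>. indicator A \<omega> * g \<omega> - c (A \<inter> SL) aL \<omega> - c (A \<inter> SU) aU \<omega> - 2 * c (A \<inter> SM) aM \<omega> \<partial>M)"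
      by (rule Bochner_Integration.integral_cong) (auto simp: g_def mean_sgn_Sat_def h_def c_def SL_def SU_def SM_def s_def aL_def aU_def aM_def space_G indicator_def)
    moreover have "integrable M (\<lambda>\<omega>. indicator A \<omega> * g \<omega>)"
      using sets_G_sets_M[OF A] measurable_G_M[OF g_G] g_bound
      by (intro integrable_bounded[where B=1]) (auto simp: indicator_def abs_mult)
    ultimately show ?thesis using c[of SL aL] c[of SU aU] c[of SM aM] by simp
  qed
  have "AE \<omega> in M. real_cond_exp M G ?f \<omega> = g \<omega>"
  proof (rule real_cond_exp_charact)
    fix A assume A: "A \<in> sets G"
    have [measurable]: "A \<in> sets M" by (rule sets_G_sets_M[OF A])
    have "(\<integral>\<omega>. indicator A \<omega> * ?f \<omega> \<partial>M) = (\<integral>\<omega>. indicator A \<omega> * h \<omega> \<partial>M)"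
    proof (rule integral_cong_AE)
      show "(\<lambda>\<omega>. indicator A \<omega> * ?f \<omega>) \<in> borel_measurable M"
        using f_M by measurable
      show "(\<lambda>\<omega>. indicator A \<omega> * h \<omega>) \<in> borel_measurable M"
        unfolding h_def I_def by measurable
    qed (use f_eq_h in \<open>auto elim!: eventually_mono\<close>)
    then show "(\<integral>\<omega>\<in>A. ?f \<omega> \<partial>M) = (\<integral>\<omega>\<in>A. g \<omega> \<partial>M)"
      using \<open>A \<in> sets G \<Longrightarrow> _\<close>[OF A] by (simp add: set_lebesgue_integral_def)
  qed (use g_G measurable_G_M g_bound f_M in \<open>auto intro!: integrable_bounded[where B=1] simp: sgn_if\<close>)
  then show ?thesis unfolding g_def .
qed

end

locale density_cdf =
  fixes F f :: "real \<Rightarrow> real"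
  assumes cdf_mono: "mono F" and cdf_at_top: "(F \<longlongrightarrow> 1) at_top"
    and density_continuous: "continuous_on UNIV f" and density_nonneg: "\<And>x. 0 \<le> f x"
    and density_integral: "\<And>x. (f has_integral F x) {..x}"
begin

lemma integrable_on_density: "f integrable_on {a..b}"
  by (rule integrable_continuous_real) (rule continuous_on_subset[OF density_continuous], simp)

lemma cdf_eq_add_integral: assumes "a \<le> y" shows "F y = F a + integral {a..y} f"
proof -
  have "(f has_integral (F a + integral {a..y} f)) ({..a} \<union> {a..y})"
  proof (rule has_integral_Un[OF density_integral integrable_integral[OF integrable_on_density]])
    have "{..a} \<inter> {a..y} = {a}" using assms by auto
    then show "negligible ({..a} \<inter> {a..y})" by simp
  qed
  moreover have "{..a} \<union> {a..y} = {..y}" using assms by auto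
  ultimately show ?thesis using density_integral[of y] has_integral_unique by metis
qed

lemma cdf_nonneg_le_one: "0 \<le> F x \<and> F x \<le> 1"
proof
  show "0 \<le> F x" using has_integral_nonneg[OF density_integral[of x]] density_nonneg by auto
  have "eventually (\<lambda>y. F x \<le> F y) at_top"
    using cdf_mono by (auto simp: eventually_at_top_linorder mono_def intro!: exI[of _ x])
  then show "F x \<le> 1" using tendsto_lowerbound[OF cdf_at_top] by auto
qed

lemma cdf_increment_bounds: assumes "a \<le> b" "\<And>y. y \<in> {a..b} \<Longrightarrow> f y \<le> c"
  shows "0 \<le> F b - F a \<and> F b - F a \<le> c * (b - a)"
proof -
  have "F b - F a = integral {a..b} f" using cdf_eq_add_integral[OF assms(1)] by simp
  moreover have "integral {a..b} f \<le> integral {a..b} (\<lambda>_. c)"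
    by (rule integral_le[OF integrable_on_density]) (use assms(2) in auto)
  moreover have "0 \<le> integral {a..b} f" by (rule integral_nonneg[OF integrable_on_density]) (use density_nonneg in auto)
  ultimately show ?thesis using assms(1) by (simp add: mult.commute)
qed

lemma isCont_cdf: "isCont F x"
proof -
  have "continuous_on {x-1..x+1} (\<lambda>y. F (x-1) + integral {x-1..y} f)"
    by (intro continuous_intros indefinite_integral_continuous_1 integrable_on_density)
  then have "continuous_on {x-1..x+1} F"
    by (rule continuous_on_eq) (use cdf_eq_add_integral in auto)
  then show ?thesis by (rule continuous_on_interior) auto
qed

lemma difference_quotient_tendsto_density: "(\<lambda>n. (F (y + 1 / real (Suc n)) - F y) / (1 / real (Suc n))) \<longlonglongrightarrow> f y"
proof -
  have d: "((\<lambda>u. integral {y..u} f) has_real_derivative f y) (at y within {y..y+1})"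
    by (rule integral_has_real_derivative) (auto intro: continuous_on_subset[OF density_continuous])
  then have "((\<lambda>u. (integral {y..u} f - integral {y..y} f) / (u - y)) \<longlongrightarrow> f y) (at y within {y..y+1})"
    by (simp add: has_field_derivative_iff)
  moreover have "filterlim (\<lambda>n. y + 1 / real (Suc n)) (at y within {y..y+1}) sequentially"
  proof (subst filterlim_at, intro conjI)
    show "\<forall>\<^sub>F n in sequentially. y + 1 / real (Suc n) \<in> {y..y + 1} \<and> y + 1 / real (Suc n) \<noteq> y"
      by (auto simp: divide_le_eq_1)
    show "(\<lambda>n. y + 1 / real (Suc n)) \<longlonglongrightarrow> y"
      using tendsto_add[OF tendsto_const[of y] LIMSEQ_Suc[OF lim_1_over_n]] by simp
  qed
  ultimately have "(\<lambda>n. (integral {y..y + 1 / real (Suc n)} f - integral {y..y} f) / (y + 1 / real (Suc n) - y)) \<longlonglongrightarrow> f y"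
    by (rule filterlim_compose)
  moreover have "(integral {y..y + 1 / real (Suc n)} f - integral {y..y} f) / (y + 1 / real (Suc n) - y)
      = (F (y + 1 / real (Suc n)) - F y) / (1 / real (Suc n))" for n
    using cdf_eq_add_integral[of y "y + 1 / real (Suc n)"] by simp
  ultimately show ?thesis by simp
qed

end

lemma density_cdf_if_cond_cdf_density:
  "cond_cdf_density M G X F f \<Longrightarrow> \<omega> \<in> space M \<Longrightarrow> density_cdf (F \<omega>) (f \<omega>)"
  unfolding cond_cdf_density_def density_cdf_def by blast

lemma cond_cdf_if_cond_cdf_density:
  assumes "finite_measure M" "subalgebra M G" "X \<in> borel_measurable M" and F: "cond_cdf_density M G X F f"
  shows "cond_cdf M G X F"
proof -
  have "finite_measure_subalgebra M G"
    using assms(1,2) by (simp add: finite_measure_subalgebra_def finite_measure_subalgebra_axioms_def)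
  moreover have "cond_cdf_axioms M G X F"
  proof unfold_locales
  show "AE \<omega> in M. F \<omega> c = real_cond_exp M G (indicator {\<omega>\<in>space M. X \<omega> \<le> c}) \<omega>"
    "(\<lambda>\<omega>. F \<omega> c) \<in> borel_measurable G" for c
    using F by (auto simp: cond_cdf_density_def)
  show "0 \<le> F \<omega> c \<and> F \<omega> c \<le> 1" "isCont (F \<omega>) c" if "\<omega> \<in> space M" for \<omega> c
    using density_cdf.cdf_nonneg_le_one density_cdf.isCont_cdf density_cdf_if_cond_cdf_density[OF F that] by blast+
  qed (rule assms)
  ultimately show ?thesis by (simp add: cond_cdf_def)
qed

lemma borel_measurable_density_at:
  assumes sub: "subalgebra M G" and F: "cond_cdf_density M G X F f" and Z: "Z \<in> borel_measurable G"
  shows "(\<lambda>\<omega>. f \<omega> (Z \<omega>)) \<in> borel_measurable G"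
proof (rule measurable_Caratheodory[OF _ _ Z])
  have space: "space G = space M" using sub by (simp add: subalgebra_def)
  note density = density_cdf_if_cond_cdf_density[OF F, unfolded space[symmetric]]
  show "isCont (f \<omega>) y" if "\<omega> \<in> space G" for \<omega> y
    using density[OF that] by (simp add: density_cdf_def continuous_on_eq_continuous_at)
  show "(\<lambda>\<omega>. f \<omega> y) \<in> borel_measurable G" for y
  proof (rule borel_measurable_LIMSEQ_real)
    show "(\<lambda>n. (F \<omega> (y + 1 / real (Suc n)) - F \<omega> y) / (1 / real (Suc n))) \<longlonglongrightarrow> f \<omega> y"
      if "\<omega> \<in> space G" for \<omega>
      by (rule density_cdf.difference_quotient_tendsto_density[OF density[OF that]])
  next
    have [measurable]: "(\<lambda>\<omega>. F \<omega> c) \<in> borel_measurable G" for c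
      using F by (simp add: cond_cdf_density_def)
    show "(\<lambda>\<omega>. (F \<omega> (y + 1 / real (Suc n)) - F \<omega> y) / (1 / real (Suc n))) \<in> borel_measurable G" for n
      by measurable
  qed
qed

section \<open>Matrices and weighted projections\<close>

lemma borel_measurable_vec_nth[measurable (raw)]:
  fixes g :: "'a \<Rightarrow> 'b::euclidean_space^'n"
  shows "g \<in> borel_measurable M \<Longrightarrow> (\<lambda>\<omega>. g \<omega> $ i) \<in> borel_measurable M"
  using measurable_compose[OF _ borel_measurable_continuous_onI[OF linear_continuous_on[OF bounded_linear_vec_nth[of i]]]]
  by blast

lemma matrix_inv_mult:
  fixes A :: "real^'n^'n"
  assumes "invertible A"
  shows "A ** matrix_inv A = mat 1 \<and> matrix_inv A ** A = mat 1"
  using assms unfolding invertible_def matrix_inv_def by (rule someI_ex)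

lemma borel_measurable_vecI:
  fixes g :: "'a \<Rightarrow> 'b::euclidean_space^'n"
  assumes "\<And>i. (\<lambda>\<omega>. g \<omega> $ i) \<in> borel_measurable M"
  shows "g \<in> borel_measurable M"
proof (subst borel_measurable_euclidean_space, intro ballI)
  fix b :: "'b^'n" assume "b \<in> Basis"
  then obtain i u where b: "b = axis i u" "u \<in> Basis" by (auto simp: Basis_vec_def)
  have "(\<lambda>\<omega>. g \<omega> $ i \<bullet> u) \<in> borel_measurable M" using assms[of i] by measurable
  then show "(\<lambda>x. g x \<bullet> b) \<in> borel_measurable M" by (simp add: b inner_axis)
qed

lemma borel_measurable_matI:
  fixes g :: "'a \<Rightarrow> real^'n^'m"
  assumes "\<And>i j. (\<lambda>\<omega>. g \<omega> $ i $ j) \<in> borel_measurable M"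
  shows "g \<in> borel_measurable M"
  by (intro borel_measurable_vecI assms)

lemma borel_measurable_det[measurable (raw)]:
  fixes A :: "'a \<Rightarrow> real^'n^'n"
  assumes [measurable]: "A \<in> borel_measurable M"
  shows "(\<lambda>\<omega>. det (A \<omega>)) \<in> borel_measurable M"
  unfolding det_def by measurable

lemma borel_measurable_matrix_mult[measurable (raw)]:
  fixes A :: "'a \<Rightarrow> real^'n^'m" and B :: "'a \<Rightarrow> real^'k^'n"
  assumes [measurable]: "A \<in> borel_measurable M" "B \<in> borel_measurable M"
  shows "(\<lambda>\<omega>. A \<omega> ** B \<omega>) \<in> borel_measurable M"
  by (rule borel_measurable_matI) (simp add: matrix_matrix_mult_def)

lemma borel_measurable_matrix_vector_mult[measurable (raw)]:
  fixes A :: "'a \<Rightarrow> real^'n^'m" and x :: "'a \<Rightarrow> real^'n"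
  assumes [measurable]: "A \<in> borel_measurable M" "x \<in> borel_measurable M"
  shows "(\<lambda>\<omega>. A \<omega> *v x \<omega>) \<in> borel_measurable M"
  by (rule borel_measurable_vecI) (simp add: matrix_vector_mult_def)

lemma borel_measurable_outer[measurable (raw)]:
  fixes x y :: "'a \<Rightarrow> real^'n"
  assumes [measurable]: "x \<in> borel_measurable M" "y \<in> borel_measurable M"
  shows "(\<lambda>\<omega>. outer (x \<omega>) (y \<omega>)) \<in> borel_measurable M"
  by (rule borel_measurable_matI) (simp add: outer_def)

lemma matrix_inv_cramer:
  fixes A :: "real^'n^'n"
  assumes "det A \<noteq> 0"
  shows "matrix_inv A $ i $ j = det (\<chi> a b. if b = i then axis j 1 $ a else A $ a $ b) / det A"
proof -
  have inv: "invertible A" using assms invertible_det_nz by blast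
  have "A *v (matrix_inv A *v axis j 1) = axis j 1"
    by (simp add: matrix_vector_mul_assoc matrix_inv_mult[OF inv])
  then have "matrix_inv A *v axis j 1 = (\<chi> k. det (\<chi> a b. if b = k then axis j 1 $ a else A $ a $ b) / det A)"
    using cramer[OF assms] by blast
  moreover have "(matrix_inv A *v axis j 1) $ i = matrix_inv A $ i $ j"
    by (simp add: matrix_vector_mult_def axis_def if_distrib cong: if_cong)
  ultimately show ?thesis by simp
qed

lemma borel_measurable_matrix_inv:
  fixes A :: "'a \<Rightarrow> real^'n^'n"
  assumes [measurable]: "A \<in> borel_measurable M" and nz: "\<And>\<omega>. \<omega> \<in> space M \<Longrightarrow> det (A \<omega>) \<noteq> 0"
  shows "(\<lambda>\<omega>. matrix_inv (A \<omega>)) \<in> borel_measurable M"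
proof (rule borel_measurable_matI)
  fix i j
  have "(\<lambda>\<omega>. det (\<chi> a b. if b = i then axis j 1 $ a else A \<omega> $ a $ b) / det (A \<omega>)) \<in> borel_measurable M"
  proof -
    have "(\<lambda>\<omega>. (\<chi> a b. if b = i then axis j 1 $ a else A \<omega> $ a $ b)) \<in> borel_measurable M"
      by (rule borel_measurable_matI) simp
    then show ?thesis by measurable
  qed
  then show "(\<lambda>\<omega>. matrix_inv (A \<omega>) $ i $ j) \<in> borel_measurable M"
    by (subst measurable_cong[OF matrix_inv_cramer[OF nz]]) auto
qed

lemma outer_matrix_vector_mult: "outer p q *v w = (q \<bullet> w) *\<^sub>R (p::real^'n)"
proof -
  have "(\<Sum>j\<in>UNIV. p $ i * q $ j * w $ j) = (\<Sum>j\<in>UNIV. q $ j * w $ j) * p $ i" for i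
    by (subst sum_distrib_right) (rule sum.cong, auto)
  then show ?thesis by (simp add: vec_eq_iff matrix_vector_mult_def outer_def inner_vec_def)
qed

lemma symmetric_inner_matrix_vector: "transpose P = P \<Longrightarrow> x \<bullet> (P *v y) = y \<bullet> (P *v (x::real^'n))"
  by (metis dot_lmul_matrix inner_commute transpose_matrix_vector)

lemma posdef_invertible:
  fixes P :: "real^'n^'n"
  assumes "posdef P" shows "invertible P" "det P \<noteq> 0"
proof -
  have "inj ((*v) P)"
  proof (rule injI)
    fix x y assume "P *v x = P *v y"
    then have "P *v (x - y) = 0" by (simp add: matrix_vector_mult_diff_distrib)
    then show "x = y" using assms unfolding posdef_def by (metis inner_zero_right less_irrefl right_minus_eq)
  qed
  then show inv: "invertible P" using matrix_left_invertible_injective invertible_left_inverse by blast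
  then show "det P \<noteq> 0" using invertible_det_nz by blast
qed

lemma posdef_matrix_inv:
  fixes P :: "real^'n^'n"
  assumes "posdef P" "x \<noteq> 0"
  shows "x \<bullet> (matrix_inv P *v x) > 0"
proof -
  define y where "y = matrix_inv P *v x"
  have PQ: "P ** matrix_inv P = mat 1"
    using posdef_invertible(1)[OF assms(1)] unfolding invertible_def matrix_inv_def by (rule someI2_ex) auto
  have x: "x = P *v y" unfolding y_def by (simp add: matrix_vector_mul_assoc PQ)
  have "y \<noteq> 0" using x assms(2) by auto
  then have "y \<bullet> (P *v y) > 0" using assms(1) by (simp add: posdef_def)
  then show ?thesis unfolding y_def[symmetric] using x by (simp add: inner_commute)
qed

lemma posdef_Cauchy_Schwarz:
  fixes P :: "real^'n^'n"
  assumes "posdef P"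
  shows "(p \<bullet> (P *v v))^2 \<le> (v \<bullet> (P *v v)) * (p \<bullet> (P *v p))"
proof -
  have sym: "transpose P = P" using assms by (simp add: posdef_def)
  have nn: "w \<bullet> (P *v w) \<ge> 0" for w using assms by (cases "w = 0") (auto simp: posdef_def less_imp_le)
  define A where "A = v \<bullet> (P *v v)"
  define B where "B = p \<bullet> (P *v v)"
  define C where "C = p \<bullet> (P *v p)"
  have q: "(v - t *\<^sub>R p) \<bullet> (P *v (v - t *\<^sub>R p)) = A - 2 * t * B + t^2 * C" for t
  proof -
    have "v \<bullet> (P *v p) = B" unfolding B_def using symmetric_inner_matrix_vector[OF sym] by simp
    then show ?thesis
      by (simp add: A_def B_def C_def matrix_vector_mult_diff_distrib matrix_vector_mult_scaleR
          inner_diff_left inner_diff_right power2_eq_square algebra_simps)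
  qed
  show ?thesis
  proof (cases "C = 0")
    case True
    have "B = 0"
    proof (rule ccontr)
      assume "B \<noteq> 0"
      have "0 \<le> A - 2 * ((A + 1) / (2 * B)) * B + ((A + 1) / (2 * B))^2 * C" using nn q by metis
      then show False using True \<open>B \<noteq> 0\<close> by (simp add: field_simps)
    qed
    then show ?thesis unfolding A_def[symmetric] B_def[symmetric] C_def[symmetric] using True by simp
  next
    case False
    then have Cp: "C > 0" using nn[of p] C_def by auto
    have "0 \<le> A - 2 * (B / C) * B + (B / C)^2 * C" using nn q by metis
    then have "0 \<le> A * C - B^2" using Cp by (simp add: field_simps power2_eq_square)
    then show ?thesis by (simp add: A_def[symmetric] B_def[symmetric] C_def[symmetric])
  qed
qed

lemma posdef_rank_one_update:
  fixes P :: "real^'n^'n"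
  assumes P: "posdef P" and mu: "\<mu> > 0" and c: "c \<ge> 0"
  shows "posdef (P - (1 / (\<mu> + c * (p \<bullet> (P *v p))) * c) *\<^sub>R (P ** outer p p ** P))"
proof -
  have sym: "transpose P = P" using P by (simp add: posdef_def)
  have nn: "w \<bullet> (P *v w) \<ge> 0" for w using P by (cases "w = 0") (auto simp: posdef_def less_imp_le)
  define C where "C = p \<bullet> (P *v p)"
  define a where "a = 1 / (\<mu> + c * C)"
  have den: "\<mu> + c * C > 0" using mu c nn[of p] C_def by (simp add: add_pos_nonneg)
  have ap: "a > 0" using den a_def by simp
  have trO: "transpose (outer p p) = outer p p" by (simp add: vec_eq_iff transpose_def outer_def mult.commute)
  have trM: "transpose (P ** outer p p ** P) = P ** outer p p ** P"
    by (simp add: matrix_transpose_mul sym trO matrix_mul_assoc)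
  have tr: "transpose (P - (a * c) *\<^sub>R (P ** outer p p ** P)) = P - (a * c) *\<^sub>R (P ** outer p p ** P)"
  proof -
    have "transpose (X - Y) = transpose X - transpose (Y::real^'n^'n)" for X Y
      by (simp add: vec_eq_iff transpose_def)
    then show ?thesis by (simp add: transpose_scalar trM sym)
  qed
  have "x \<bullet> ((P - (a * c) *\<^sub>R (P ** outer p p ** P)) *v x) > 0" if x: "x \<noteq> 0" for x
  proof -
    define A where "A = x \<bullet> (P *v x)"
    define B where "B = p \<bullet> (P *v x)"
    have Ap: "A > 0" using P x by (simp add: posdef_def A_def)
    have e1: "(P ** outer p p ** P) *v x = B *\<^sub>R (P *v p)"
      by (simp add: matrix_vector_mul_assoc[symmetric] outer_matrix_vector_mult B_def matrix_vector_mult_scaleR)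
    have e2: "x \<bullet> (P *v p) = B" unfolding B_def using symmetric_inner_matrix_vector[OF sym] by simp
    have val: "x \<bullet> ((P - (a * c) *\<^sub>R (P ** outer p p ** P)) *v x) = A - a * c * B^2"
      by (simp add: matrix_vector_mult_diff_rdistrib scaleR_matrix_vector_assoc[symmetric] e1 inner_diff_right e2 A_def power2_eq_square)
    have cs: "B^2 \<le> A * C" using posdef_Cauchy_Schwarz[OF P, of p x] by (simp add: A_def B_def C_def)
    have "a * c * B^2 \<le> a * c * (A * C)" using cs ap c by (simp add: mult_left_mono)
    moreover have "A - a * c * (A * C) = A * (a * \<mu>)"
      using den by (simp add: a_def field_simps)
    moreover have "A * (a * \<mu>) > 0" using Ap ap mu by simp
    ultimately show ?thesis using val by linarith
  qed
  then show ?thesis using tr unfolding posdef_def a_def C_def by auto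
qed

lemma continuous_on_matrix_vector_mult: "continuous_on S (\<lambda>y. (Q::real^'n^'m) *v y)"
  by (rule linear_continuous_on) (simp add: linear_conv_bounded_linear[symmetric])

lemma continuous_on_qnorm_diff: "continuous_on S (\<lambda>y. qnorm Q (z - y))"
  unfolding qnorm_def
  by (intro continuous_intros continuous_on_compose2[OF continuous_on_matrix_vector_mult[of UNIV Q]]) auto

lemma proj_minimizes:
  assumes "compact D" "D \<noteq> {}"
  shows "proj Q D z \<in> D \<and> (\<forall>w\<in>D. qnorm Q (z - proj Q D z) \<le> qnorm Q (z - w))"
proof -
  obtain y where "y \<in> D" "\<forall>w\<in>D. qnorm Q (z - y) \<le> qnorm Q (z - w)"
    using continuous_attains_inf[OF assms continuous_on_qnorm_diff] by blast
  then have "\<exists>y. y \<in> D \<and> (\<forall>w\<in>D. qnorm Q (z - y) \<le> qnorm Q (z - w))" by blast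
  then show ?thesis unfolding proj_def by (rule someI_ex)
qed

lemma quadratic_form_parallelogram:
  fixes Q :: "real^'n^'n"
  shows "(a + b) \<bullet> (Q *v (a + b)) + (a - b) \<bullet> (Q *v (a - b)) = 2 * (a \<bullet> (Q *v a)) + 2 * (b \<bullet> (Q *v b))"
  by (simp add: matrix_vector_right_distrib matrix_vector_mult_diff_distrib inner_add_left inner_add_right
      inner_diff_left inner_diff_right)

lemma quadratic_form_scaleR:
  fixes Q :: "real^'n^'n"
  shows "(c *\<^sub>R a) \<bullet> (Q *v (c *\<^sub>R a)) = c^2 * (a \<bullet> (Q *v a))"
  by (simp add: matrix_vector_mult_scaleR power2_eq_square)

lemma qnorm_minimizer_unique:
  fixes Q :: "real^'n^'n"
  assumes pd: "\<And>x. x \<noteq> 0 \<Longrightarrow> x \<bullet> (Q *v x) > 0" and cv: "convex D"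
    and y1: "y1 \<in> D" "\<forall>w\<in>D. qnorm Q (z - y1) \<le> qnorm Q (z - w)"
    and y2: "y2 \<in> D" "\<forall>w\<in>D. qnorm Q (z - y2) \<le> qnorm Q (z - w)"
  shows "y1 = y2"
proof (rule ccontr)
  assume ne: "y1 \<noteq> y2"
  define q where "q w = w \<bullet> (Q *v w)" for w
  have qnn: "q w \<ge> 0" for w using pd[of w] by (cases "w = 0") (auto simp: q_def)
  have qn: "qnorm Q w = sqrt (q w)" for w by (simp add: qnorm_def q_def)
  define w1 where "w1 = z - y1"
  define w2 where "w2 = z - y2"
  define ym where "ym = (1/2) *\<^sub>R y1 + (1/2) *\<^sub>R y2"
  have ymD: "ym \<in> D" unfolding ym_def using convexD[OF cv y1(1) y2(1), of "1/2" "1/2"] by simp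
  have eq12: "q w1 = q w2"
    using y1(2)[rule_format, OF y2(1)] y2(2)[rule_format, OF y1(1)] qnn by (simp add: qn w1_def w2_def)
  have half: "(1/2::real) *\<^sub>R z + (1/2::real) *\<^sub>R z = z" by (simp add: scaleR_left_distrib[symmetric])
  have zm: "z - ym = (1/2) *\<^sub>R (w1 + w2)"
  proof -
    have "(1/2::real) *\<^sub>R (w1 + w2) = ((1/2::real) *\<^sub>R z - (1/2::real) *\<^sub>R y1) + ((1/2::real) *\<^sub>R z - (1/2::real) *\<^sub>R y2)"
      by (simp add: w1_def w2_def scaleR_right_distrib scaleR_right_diff_distrib)
    also have "\<dots> = ((1/2::real) *\<^sub>R z + (1/2::real) *\<^sub>R z) - ym" unfolding ym_def by (simp add: algebra_simps)
    finally show ?thesis using half by simp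
  qed
  have "q (w1 - w2) > 0" using ne pd[of "w1 - w2"] by (auto simp: q_def w1_def w2_def)
  moreover have "q (w1 + w2) + q (w1 - w2) = 2 * q w1 + 2 * q w2" unfolding q_def by (rule quadratic_form_parallelogram)
  ultimately have "q (z - ym) < q w1"
    unfolding zm q_def quadratic_form_scaleR using eq12 unfolding q_def by (simp add: power2_eq_square)
  then have "qnorm Q (z - ym) < qnorm Q (z - y1)" by (simp add: qn w1_def)
  then show False using y1(2) ymD by force
qed

lemma borel_measurable_proj:
  fixes Q :: "'a \<Rightarrow> real^'n^'n" and z :: "'a \<Rightarrow> real^'n"
  assumes [measurable]: "Q \<in> borel_measurable M" "z \<in> borel_measurable M"
    and D: "compact D" "convex D" "D \<noteq> {}"
    and pos: "\<And>\<omega> x. \<omega> \<in> space M \<Longrightarrow> x \<noteq> 0 \<Longrightarrow> x \<bullet> (Q \<omega> *v x) > 0"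
  shows "(\<lambda>\<omega>. proj (Q \<omega>) D (z \<omega>)) \<in> borel_measurable M"
proof (rule borel_measurable_vecI)
  fix j
  define h where "h \<omega> y = qnorm (Q \<omega>) (z \<omega> - y)" for \<omega> y
  define p where "p \<omega> = proj (Q \<omega>) D (z \<omega>)" for \<omega>
  have h_continuous: "continuous_on K (h \<omega>)" for K \<omega>
    unfolding h_def by (rule continuous_on_qnorm_diff)
  have INF_measurable: "(\<lambda>\<omega>. INF y\<in>K. h \<omega> y) \<in> borel_measurable M" if "compact K" "K \<noteq> {}" for K
    by (rule borel_measurable_INF_compact[OF _ h_continuous that]) (unfold h_def qnorm_def, measurable)
  have p_min: "p \<omega> \<in> D" "\<And>w. w \<in> D \<Longrightarrow> h \<omega> (p \<omega>) \<le> h \<omega> w" for \<omega>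
    unfolding p_def h_def using proj_minimizes[OF D(1,3)] by blast+
  have INF_D: "(INF y\<in>D. h \<omega> y) = h \<omega> (p \<omega>)" for \<omega>
    using p_min by (intro cInf_eq_minimum) auto
  show "(\<lambda>\<omega>. proj (Q \<omega>) D (z \<omega>) $ j) \<in> borel_measurable M"
    unfolding p_def[symmetric]
  proof (rule borel_measurable_iff_le[THEN iffD2], intro allI)
    fix c
    define Dc where "Dc = D \<inter> {y. y $ j \<le> c}"
    have "compact Dc" unfolding Dc_def
      by (rule compact_Int_closed[OF D(1)]) (intro closed_Collect_le continuous_intros)
    show "{\<omega> \<in> space M. p \<omega> $ j \<le> c} \<in> sets M"
    proof (cases "Dc = {}")
      case True
      then have "{\<omega> \<in> space M. p \<omega> $ j \<le> c} = {}" using p_min by (auto simp: Dc_def)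
      then show ?thesis by (metis sets.empty_sets)
    next
      case False
      have "p \<omega> $ j \<le> c \<longleftrightarrow> (INF y\<in>Dc. h \<omega> y) \<le> (INF y\<in>D. h \<omega> y)" if \<omega>: "\<omega> \<in> space M" for \<omega>
      proof
        assume "p \<omega> $ j \<le> c"
        then have "p \<omega> \<in> Dc" using p_min by (simp add: Dc_def)
        moreover have "bdd_below (h \<omega> ` Dc)" using p_min by (auto simp: bdd_below_def Dc_def)
        ultimately show "(INF y\<in>Dc. h \<omega> y) \<le> (INF y\<in>D. h \<omega> y)"
          unfolding INF_D by (metis cINF_lower)
      next
        assume le: "(INF y\<in>Dc. h \<omega> y) \<le> (INF y\<in>D. h \<omega> y)"
        obtain y where y: "y \<in> Dc" "\<And>w. w \<in> Dc \<Longrightarrow> h \<omega> y \<le> h \<omega> w"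
          using continuous_attains_inf[OF \<open>compact Dc\<close> False h_continuous] by blast
        have "(INF y\<in>Dc. h \<omega> y) = h \<omega> y" using y by (intro cInf_eq_minimum) auto
        then have "h \<omega> y \<le> h \<omega> (p \<omega>)" using le INF_D by simp
        then have "\<forall>w\<in>D. h \<omega> y \<le> h \<omega> w" using p_min(2) by (blast intro: order_trans)
        then have "y = p \<omega>"
          using qnorm_minimizer_unique[OF pos[OF \<omega>] D(2)] y(1) p_min unfolding h_def Dc_def by blast
        then show "p \<omega> $ j \<le> c" using y(1) by (simp add: Dc_def)
      qed
      then have "{\<omega> \<in> space M. p \<omega> $ j \<le> c} = {\<omega> \<in> space M. (INF y\<in>Dc. h \<omega> y) \<le> (INF y\<in>D. h \<omega> y)}"
        by blast
      then show ?thesis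
        using INF_measurable[OF \<open>compact Dc\<close> False] INF_measurable[OF D(1,3)] by simp
    qed
  qed
qed

lemma projected_recursion_step:
  fixes \<theta> \<phi> :: "'a \<Rightarrow> real^'n" and P P' :: "'a \<Rightarrow> real^'n^'n" and \<beta> \<mu> b a v :: "'a \<Rightarrow> real"
  assumes sub: "subalgebra G' G" and space: "space G = \<Omega>"
    and [measurable]: "\<theta> \<in> borel_measurable G" "P \<in> borel_measurable G" "\<phi> \<in> borel_measurable G"
      "\<beta> \<in> borel_measurable G" "\<mu> \<in> borel_measurable G" "b \<in> borel_measurable G" "v \<in> borel_measurable G'"
    and pos: "\<And>\<omega>. \<omega> \<in> \<Omega> \<Longrightarrow> posdef (P \<omega>) \<and> 0 \<le> \<beta> \<omega> \<and> 0 < \<mu> \<omega>"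
    and D: "compact D" "convex D" "D \<noteq> {}"
    and a: "\<And>\<omega>. \<omega> \<in> \<Omega> \<Longrightarrow> a \<omega> = 1 / (\<mu> \<omega> + \<beta> \<omega> * (b \<omega>)\<^sup>2 * (\<phi> \<omega> \<bullet> (P \<omega> *v \<phi> \<omega>)))"
    and P': "\<And>\<omega>. \<omega> \<in> \<Omega> \<Longrightarrow>
      P' \<omega> = P \<omega> - (a \<omega> * \<beta> \<omega> * (b \<omega>)\<^sup>2) *\<^sub>R (P \<omega> ** outer (\<phi> \<omega>) (\<phi> \<omega>) ** P \<omega>)"
    and \<theta>': "\<And>\<omega>. \<omega> \<in> \<Omega> \<Longrightarrow>
      \<theta>' \<omega> = proj (matrix_inv (P' \<omega>)) D (\<theta> \<omega> + (a \<omega> * b \<omega> * v \<omega>) *\<^sub>R (P \<omega> *v \<phi> \<omega>))"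
  shows "P' \<in> borel_measurable G" "\<And>\<omega>. \<omega> \<in> \<Omega> \<Longrightarrow> posdef (P' \<omega>)" "\<theta>' \<in> borel_measurable G'"
proof -
  have space': "space G' = \<Omega>" using sub space by (simp add: subalgebra_def)
  note G_G' = measurable_from_subalg[OF sub]
  have [measurable]: "a \<in> borel_measurable G"
    by (subst measurable_cong[OF a]) (simp_all add: space, measurable)
  show P'_G: "P' \<in> borel_measurable G"
    by (subst measurable_cong[OF P']) (simp_all add: space, measurable)
  show P'_pos: "posdef (P' \<omega>)" if "\<omega> \<in> \<Omega>" for \<omega>
  proof -
    have "a \<omega> * \<beta> \<omega> * (b \<omega>)\<^sup>2
        = 1 / (\<mu> \<omega> + \<beta> \<omega> * (b \<omega>)\<^sup>2 * (\<phi> \<omega> \<bullet> (P \<omega> *v \<phi> \<omega>))) * (\<beta> \<omega> * (b \<omega>)\<^sup>2)"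
      using a[OF that] by simp
    then show ?thesis unfolding P'[OF that]
      using posdef_rank_one_update[of "P \<omega>" "\<mu> \<omega>" "\<beta> \<omega> * (b \<omega>)\<^sup>2" "\<phi> \<omega>"] pos[OF that] by simp
  qed
  have [measurable]: "(\<lambda>\<omega>. matrix_inv (P' \<omega>)) \<in> borel_measurable G'"
    using P'_pos posdef_invertible(2) space' by (intro borel_measurable_matrix_inv G_G' P'_G) auto
  show "\<theta>' \<in> borel_measurable G'"
  proof (subst measurable_cong[OF \<theta>'])
    show "(\<lambda>\<omega>. proj (matrix_inv (P' \<omega>)) D (\<theta> \<omega> + (a \<omega> * b \<omega> * v \<omega>) *\<^sub>R (P \<omega> *v \<phi> \<omega>)))
        \<in> borel_measurable G'"
    proof (rule borel_measurable_proj[OF _ _ D])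
      have [measurable]: "\<theta> \<in> borel_measurable G'" "P \<in> borel_measurable G'" "\<phi> \<in> borel_measurable G'"
        "a \<in> borel_measurable G'" "b \<in> borel_measurable G'"
        by (intro G_G'; measurable)+
      show "(\<lambda>\<omega>. \<theta> \<omega> + (a \<omega> * b \<omega> * v \<omega>) *\<^sub>R (P \<omega> *v \<phi> \<omega>)) \<in> borel_measurable G'"
        by measurable
    qed (use P'_pos posdef_matrix_inv space' in auto)
  qed (simp add: space')
qed

section \<open>The linearisation error of psi\<close>

theorem lemma7:
  fixes M :: "'a measure"
    and Fs :: "nat \<Rightarrow> 'a measure"
    and \<phi> :: "nat \<Rightarrow> 'a \<Rightarrow> real^'d"
    and \<theta> :: "real^'d"
    and \<epsilon> :: "nat \<Rightarrow> 'a \<Rightarrow> real"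
    and y :: "nat \<Rightarrow> 'a \<Rightarrow> real"
    and D :: "(real^'d) set"
    and Cs :: "nat \<Rightarrow> 'a \<Rightarrow> real"
    and C Mc :: real
    and L l u U b :: "nat \<Rightarrow> 'a \<Rightarrow> real"
    and F f :: "nat \<Rightarrow> 'a \<Rightarrow> real \<Rightarrow> real"
    and \<theta>b \<theta>s :: "nat \<Rightarrow> 'a \<Rightarrow> real^'d"
    and Pb P :: "nat \<Rightarrow> 'a \<Rightarrow> real^'d^'d"
    and \<mu>b \<mu> vb v ab a \<beta>b \<beta> \<psi> :: "nat \<Rightarrow> 'a \<Rightarrow> real"
    and \<theta>b0 \<theta>0 :: "real^'d"
    and Pb0 P0 :: "real^'d^'d"
  assumes M: "prob_space M"
    and filt_sub: "\<And>k. subalgebra M (Fs k)"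
    and filt_mono: "\<And>k. sets (Fs k) \<subseteq> sets (Fs (Suc k))"
    \<comment> \<open>model\<close>
    and phi_meas: "\<And>k. \<phi> k \<in> borel_measurable (Fs k)"
    and eps_meas: "\<And>k. \<epsilon> (Suc k) \<in> borel_measurable (Fs (Suc k))"
    and y_def: "\<And>k \<omega>. \<omega> \<in> space M \<Longrightarrow>
        y (Suc k) \<omega> = Sat (L k \<omega>) (l k \<omega>) (u k \<omega>) (U k \<omega>) (\<phi> k \<omega> \<bullet> \<theta> + \<epsilon> (Suc k) \<omega>)"
    \<comment> \<open>A1\<close>
    and A1_phi_bdd: "\<forall>\<omega>\<in>space M. \<exists>B. \<forall>k. norm (\<phi> k \<omega>) \<le> B"
    and A1_D: "convex D" "compact D" "\<theta> \<in> interior D"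
    and A1_C_meas: "\<And>k. Cs k \<in> borel_measurable (Fs k)"
    and A1_C_bdd: "\<exists>B. \<forall>k. \<forall>\<omega>\<in>space M. \<bar>Cs k \<omega>\<bar> \<le> B"
    and A1_C: "\<And>k \<omega> x. \<omega> \<in> space M \<Longrightarrow> x \<in> D \<Longrightarrow> \<bar>\<phi> k \<omega> \<bullet> x\<bar> \<le> Cs k \<omega>"
    \<comment> \<open>A2\<close>
    and A2_meas: "\<And>k. l k \<in> borel_measurable (Fs k)" "\<And>k. u k \<in> borel_measurable (Fs k)"
                 "\<And>k. L k \<in> borel_measurable (Fs k)" "\<And>k. U k \<in> borel_measurable (Fs k)"
    and A2_order: "AE \<omega> in M. \<forall>k. L k \<omega> \<le> l k \<omega> \<and> l k \<omega> \<le> u k \<omega> \<and> u k \<omega> \<le> U k \<omega>"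
    and A2_M: "AE \<omega> in M. \<forall>k. max (l k \<omega>) (- u k \<omega>) \<le> Mc"
    and A2_nondeg: "AE \<omega> in M. \<forall>k. \<not> (L k \<omega> = l k \<omega> \<and> l k \<omega> = u k \<omega> \<and> u k \<omega> = U k \<omega>)"
    and A2_b_meas: "\<And>k. b k \<in> borel_measurable (Fs k)"
    and A2_b: "\<exists>b0>0. \<forall>k. \<forall>\<omega>\<in>space M. b0 \<le> b k \<omega> \<and> b k \<omega> \<le> 1"
    \<comment> \<open>A3\<close>
    and A3_cdf: "\<And>k. cond_cdf_density M (Fs k) (\<epsilon> (Suc k)) (F (Suc k)) (f (Suc k))"
    and A3_half: "\<And>k \<omega>. \<omega> \<in> space M \<Longrightarrow> F (Suc k) \<omega> 0 = 1 / 2"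
    and A3_C: "\<And>k \<omega>. \<omega> \<in> space M \<Longrightarrow> Cs k \<omega> \<le> C"
    and A3_f: "AE \<omega> in M. \<exists>c1 c2. 0 < c1 \<and> (\<forall>k x. \<bar>x\<bar> \<le> max (2 * C) (C + Mc) \<longrightarrow>
                   c1 \<le> f (Suc k) \<omega> x \<and> f (Suc k) \<omega> x \<le> c2)"
    \<comment> \<open>Step 1 of TSWLAD\<close>
    and S1_init: "\<theta>b0 \<in> D" "posdef Pb0" "\<And>\<omega>. \<theta>b 0 \<omega> = \<theta>b0" "\<And>\<omega>. Pb 0 \<omega> = Pb0"
    and S1_mu_meas: "\<And>k. \<mu>b k \<in> borel_measurable (Fs k)"
    and S1_mu: "\<exists>m1 m2. 0 < m1 \<and> (\<forall>k. \<forall>\<omega>\<in>space M. m1 \<le> \<mu>b k \<omega> \<and> \<mu>b k \<omega> \<le> m2)"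
    and S1_beta: "\<And>k \<omega>. \<omega> \<in> space M \<Longrightarrow> \<beta>b k \<omega> =
        Inf (f (Suc k) \<omega> ` {x. \<bar>x\<bar> \<le> max (2 * Cs k \<omega>) (max (Cs k \<omega> + l k \<omega>) (Cs k \<omega> - u k \<omega>))})"
    and S1_a: "\<And>k \<omega>. \<omega> \<in> space M \<Longrightarrow> ab k \<omega> =
        1 / (\<mu>b k \<omega> + \<beta>b k \<omega> * (b k \<omega>)\<^sup>2 * (\<phi> k \<omega> \<bullet> (Pb k \<omega> *v \<phi> k \<omega>)))"
    and S1_P: "\<And>k \<omega>. \<omega> \<in> space M \<Longrightarrow> Pb (Suc k) \<omega> =
        Pb k \<omega> - (ab k \<omega> * \<beta>b k \<omega> * (b k \<omega>)\<^sup>2) *\<^sub>R (Pb k \<omega> ** outer (\<phi> k \<omega>) (\<phi> k \<omega>) ** Pb k \<omega>)"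
    and S1_v: "\<And>k \<omega>. \<omega> \<in> space M \<Longrightarrow> vb (Suc k) \<omega> =
        sgn (y (Suc k) \<omega> - Sat (L k \<omega>) (l k \<omega>) (u k \<omega>) (U k \<omega>) (\<phi> k \<omega> \<bullet> \<theta>b k \<omega>))
        + corr (F (Suc k) \<omega>) (L k \<omega>) (l k \<omega>) (u k \<omega>) (U k \<omega>) (\<phi> k \<omega> \<bullet> \<theta>b k \<omega>)"
    and S1_theta: "\<And>k \<omega>. \<omega> \<in> space M \<Longrightarrow> \<theta>b (Suc k) \<omega> =
        proj (matrix_inv (Pb (Suc k) \<omega>)) D
          (\<theta>b k \<omega> + (ab k \<omega> * b k \<omega> * vb (Suc k) \<omega>) *\<^sub>R (Pb k \<omega> *v \<phi> k \<omega>))"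
    \<comment> \<open>Step 2 of TSWLAD\<close>
    and S2_init: "\<theta>0 \<in> D" "posdef P0" "\<And>\<omega>. \<theta>s 0 \<omega> = \<theta>0" "\<And>\<omega>. P 0 \<omega> = P0"
    and S2_mu_meas: "\<And>k. \<mu> k \<in> borel_measurable (Fs k)"
    and S2_mu: "\<exists>m1 m2. 0 < m1 \<and> (\<forall>k. \<forall>\<omega>\<in>space M. m1 \<le> \<mu> k \<omega> \<and> \<mu> k \<omega> \<le> m2)"
    and S2_beta: "\<And>k \<omega>. \<omega> \<in> space M \<Longrightarrow> \<beta> k \<omega> =
        beta2 (F (Suc k) \<omega>) (f (Suc k) \<omega>) (L k \<omega>) (l k \<omega>) (u k \<omega>) (U k \<omega>)
              (\<phi> k \<omega> \<bullet> \<theta>s k \<omega>) (\<phi> k \<omega> \<bullet> \<theta>b k \<omega>)"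
    and S2_a: "\<And>k \<omega>. \<omega> \<in> space M \<Longrightarrow> a k \<omega> =
        1 / (\<mu> k \<omega> + \<beta> k \<omega> * (b k \<omega>)\<^sup>2 * (\<phi> k \<omega> \<bullet> (P k \<omega> *v \<phi> k \<omega>)))"
    and S2_P: "\<And>k \<omega>. \<omega> \<in> space M \<Longrightarrow> P (Suc k) \<omega> =
        P k \<omega> - (a k \<omega> * \<beta> k \<omega> * (b k \<omega>)\<^sup>2) *\<^sub>R (P k \<omega> ** outer (\<phi> k \<omega>) (\<phi> k \<omega>) ** P k \<omega>)"
    and S2_v: "\<And>k \<omega>. \<omega> \<in> space M \<Longrightarrow> v (Suc k) \<omega> =
        sgn (y (Suc k) \<omega> - Sat (L k \<omega>) (l k \<omega>) (u k \<omega>) (U k \<omega>) (\<phi> k \<omega> \<bullet> \<theta>s k \<omega>))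
        + corr (F (Suc k) \<omega>) (L k \<omega>) (l k \<omega>) (u k \<omega>) (U k \<omega>) (\<phi> k \<omega> \<bullet> \<theta>s k \<omega>)"
    and S2_theta: "\<And>k \<omega>. \<omega> \<in> space M \<Longrightarrow> \<theta>s (Suc k) \<omega> =
        proj (matrix_inv (P (Suc k) \<omega>)) D
          (\<theta>s k \<omega> + (a k \<omega> * b k \<omega> * v (Suc k) \<omega>) *\<^sub>R (P k \<omega> *v \<phi> k \<omega>))"
    \<comment> \<open>definition of psi_k\<close>
    and psi_def: "\<And>k \<omega>. \<psi> k \<omega> =
        real_cond_exp M (Fs k)
          (\<lambda>\<omega>'. sgn (y (Suc k) \<omega>' - Sat (L k \<omega>') (l k \<omega>') (u k \<omega>') (U k \<omega>') (\<phi> k \<omega>' \<bullet> \<theta>s k \<omega>'))) \<omega>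
        + corr (F (Suc k) \<omega>) (L k \<omega>) (l k \<omega>) (u k \<omega>) (U k \<omega>) (\<phi> k \<omega> \<bullet> \<theta>s k \<omega>)"
  shows "AE \<omega> in M. \<exists>K. \<forall>k.
           \<bar>\<psi> k \<omega> - \<beta> k \<omega> * (\<phi> k \<omega> \<bullet> (\<theta> - \<theta>s k \<omega>))\<bar> \<le> K * \<bar>\<phi> k \<omega> \<bullet> (\<theta> - \<theta>b k \<omega>)\<bar>"
proof -
  interpret prob_space M by (rule M)
  have space_Fs: "\<And>k. space (Fs k) = space M"
    using filt_sub by (simp add: subalgebra_def)
  have Fs_Suc: "\<And>k. subalgebra (Fs (Suc k)) (Fs k)"
    using filt_mono space_Fs by (simp add: subalgebra_def)
  have density: "\<And>k \<omega>. \<omega> \<in> space M \<Longrightarrow> density_cdf (F (Suc k) \<omega>) (f (Suc k) \<omega>)"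
    by (rule density_cdf_if_cond_cdf_density[OF A3_cdf])
  have cdf: "cond_cdf M (Fs k) (\<epsilon> (Suc k)) (F (Suc k))" for k
    using A3_cdf filt_sub measurable_from_subalg[OF filt_sub eps_meas]
    by (intro cond_cdf_if_cond_cdf_density) unfold_locales
  have F_at: "\<And>k Z. Z \<in> borel_measurable (Fs k) \<Longrightarrow> (\<lambda>\<omega>. F (Suc k) \<omega> (Z \<omega>)) \<in> borel_measurable (Fs k)"
    by (rule cond_cdf.cdf_at_measurable[OF cdf])
  have f_at: "\<And>k Z. Z \<in> borel_measurable (Fs k) \<Longrightarrow> (\<lambda>\<omega>. f (Suc k) \<omega> (Z \<omega>)) \<in> borel_measurable (Fs k)"
    by (rule borel_measurable_density_at[OF filt_sub A3_cdf])
  have D: "compact D" "convex D" "D \<noteq> {}" "\<theta> \<in> D"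
    using A1_D interior_subset by auto
  have in_D: "\<And>k \<omega>. \<omega> \<in> space M \<Longrightarrow> \<theta>s k \<omega> \<in> D \<and> \<theta>b k \<omega> \<in> D"
    by (case_tac k) (simp_all add: S1_init S2_init S1_theta S2_theta proj_minimizes[OF D(1,3)])
  have bounded: "\<And>k \<omega>. \<omega> \<in> space M \<Longrightarrow>
      \<bar>\<phi> k \<omega> \<bullet> \<theta>\<bar> \<le> C \<and> \<bar>\<phi> k \<omega> \<bullet> \<theta>s k \<omega>\<bar> \<le> C \<and> \<bar>\<phi> k \<omega> \<bullet> \<theta>b k \<omega>\<bar> \<le> C \<and> 0 \<le> Cs k \<omega>"
    using A1_C A3_C D(4) in_D by (meson abs_ge_zero order_trans)
  note [measurable] = phi_meas A2_meas A2_b_meas S1_mu_meas S2_mu_meas A1_C_meas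
  have Fs_Suc_measurable: "\<And>k g. g \<in> borel_measurable (Fs k) \<Longrightarrow> g \<in> borel_measurable (Fs (Suc k))"
    using measurable_from_subalg[OF Fs_Suc] .
  obtain m1 m2 n1 n2 where \<mu>_pos: "0 < m1" "0 < n1"
    and \<mu>_bounds: "\<And>k \<omega>. \<omega> \<in> space M \<Longrightarrow> m1 \<le> \<mu>b k \<omega> \<and> \<mu>b k \<omega> \<le> m2 \<and> n1 \<le> \<mu> k \<omega> \<and> \<mu> k \<omega> \<le> n2"
    using S1_mu S2_mu by metis
  have \<beta>_nonneg: "0 \<le> \<beta> k \<omega> \<and> 0 \<le> \<beta>b k \<omega>" if \<omega>: "\<omega> \<in> space M" for k \<omega>
  proof
    show "0 \<le> \<beta> k \<omega>" unfolding S2_beta[OF \<omega>] using density[OF \<omega>] A3_half[OF \<omega>]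
      by (intro beta2_nonneg) (auto simp: density_cdf_def)
    have "{x. \<bar>x\<bar> \<le> max (2 * Cs k \<omega>) (max (Cs k \<omega> + l k \<omega>) (Cs k \<omega> - u k \<omega>))} \<noteq> {}"
      using bounded[OF \<omega>, of k] by (auto intro!: exI[of _ 0])
    then show "0 \<le> \<beta>b k \<omega>" unfolding S1_beta[OF \<omega>]
      using density[OF \<omega>] by (intro cINF_greatest) (auto simp: density_cdf_def)
  qed
  have \<beta>_measurable: "\<beta> k \<in> borel_measurable (Fs k)"
    if [measurable]: "\<theta>s k \<in> borel_measurable (Fs k)" "\<theta>b k \<in> borel_measurable (Fs k)" for k
  proof (subst measurable_cong[OF S2_beta])
    show "(\<lambda>\<omega>. beta2 (F (Suc k) \<omega>) (f (Suc k) \<omega>) (L k \<omega>) (l k \<omega>) (u k \<omega>) (U k \<omega>) (\<phi> k \<omega> \<bullet> \<theta>s k \<omega>)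
        (\<phi> k \<omega> \<bullet> \<theta>b k \<omega>)) \<in> borel_measurable (Fs k)"
      by (rule borel_measurable_beta2[OF _ _ _ _ _ _ F_at f_at]) measurable
  qed (simp add: space_Fs)
  have \<beta>b_measurable: "\<beta>b k \<in> borel_measurable (Fs k)" for k
  proof (subst measurable_cong[OF S1_beta])
    show "(\<lambda>\<omega>. Inf (f (Suc k) \<omega> ` {x. \<bar>x\<bar> \<le> max (2 * Cs k \<omega>) (max (Cs k \<omega> + l k \<omega>) (Cs k \<omega> - u k \<omega>))}))
        \<in> borel_measurable (Fs k)"
    proof (rule borel_measurable_Inf_abs_le)
      show "(\<lambda>\<omega>. f (Suc k) \<omega> y) \<in> borel_measurable (Fs k)" for y
        by (rule f_at) simp
      show "isCont (f (Suc k) \<omega>) y" if "\<omega> \<in> space (Fs k)" for \<omega> y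
        using density[of \<omega> k] that space_Fs by (simp add: density_cdf_def continuous_on_eq_continuous_at)
      show "0 \<le> max (2 * Cs k \<omega>) (max (Cs k \<omega> + l k \<omega>) (Cs k \<omega> - u k \<omega>))" if "\<omega> \<in> space (Fs k)" for \<omega>
        using bounded[of \<omega> k] that space_Fs by (simp add: le_max_iff_disj)
    qed measurable
  qed (simp add: space_Fs)
  have y_measurable: "y (Suc k) \<in> borel_measurable (Fs (Suc k))" for k
  proof (subst measurable_cong[OF y_def])
    note [measurable] = Fs_Suc_measurable[OF phi_meas[of k]] A2_meas(1-4)[THEN Fs_Suc_measurable] eps_meas
    show "(\<lambda>\<omega>. Sat (L k \<omega>) (l k \<omega>) (u k \<omega>) (U k \<omega>) (\<phi> k \<omega> \<bullet> \<theta> + \<epsilon> (Suc k) \<omega>)) \<in> borel_measurable (Fs (Suc k))"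
      unfolding Sat_def by measurable
  qed (simp add: space_Fs)
  have innovation_measurable: "(\<lambda>\<omega>. sgn (y (Suc k) \<omega> - Sat (L k \<omega>) (l k \<omega>) (u k \<omega>) (U k \<omega>) (x \<omega>))
      + corr (F (Suc k) \<omega>) (L k \<omega>) (l k \<omega>) (u k \<omega>) (U k \<omega>) (x \<omega>)) \<in> borel_measurable (Fs (Suc k))"
    if "x \<in> borel_measurable (Fs k)" for k x
  proof -
    have [measurable]: "x \<in> borel_measurable (Fs (Suc k))" "L k \<in> borel_measurable (Fs (Suc k))"
      "l k \<in> borel_measurable (Fs (Suc k))" "u k \<in> borel_measurable (Fs (Suc k))"
      "U k \<in> borel_measurable (Fs (Suc k))" "y (Suc k) \<in> borel_measurable (Fs (Suc k))"
      "(\<lambda>\<omega>. F (Suc k) \<omega> (u k \<omega> - x \<omega>)) \<in> borel_measurable (Fs (Suc k))"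
      "(\<lambda>\<omega>. F (Suc k) \<omega> (l k \<omega> - x \<omega>)) \<in> borel_measurable (Fs (Suc k))"
      using that by (auto intro!: Fs_Suc_measurable F_at y_measurable)
    show ?thesis by (intro borel_measurable_add borel_measurable_corr; measurable)
  qed
  have adapted: "\<theta>s k \<in> borel_measurable (Fs k) \<and> \<theta>b k \<in> borel_measurable (Fs k) \<and>
      P k \<in> borel_measurable (Fs k) \<and> Pb k \<in> borel_measurable (Fs k) \<and>
      (\<forall>\<omega>\<in>space M. posdef (P k \<omega>) \<and> posdef (Pb k \<omega>))" for k
  proof (induction k)
    case 0
    have "\<theta>s 0 = (\<lambda>_. \<theta>0)" "\<theta>b 0 = (\<lambda>_. \<theta>b0)" "P 0 = (\<lambda>_. P0)" "Pb 0 = (\<lambda>_. Pb0)"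
      by (simp_all add: fun_eq_iff S1_init S2_init)
    then show ?case using S1_init(2) S2_init(2) by simp
  next
    case (Suc k)
    then have IH[measurable]: "\<theta>s k \<in> borel_measurable (Fs k)" "\<theta>b k \<in> borel_measurable (Fs k)"
      "P k \<in> borel_measurable (Fs k)" "Pb k \<in> borel_measurable (Fs k)"
      and pos: "\<And>\<omega>. \<omega> \<in> space (Fs k) \<Longrightarrow> posdef (P k \<omega>) \<and> posdef (Pb k \<omega>)"
      by (auto simp: space_Fs)
    have v_measurable: "v (Suc k) \<in> borel_measurable (Fs (Suc k))" "vb (Suc k) \<in> borel_measurable (Fs (Suc k))"
      by (subst measurable_cong[OF S2_v] measurable_cong[OF S1_v], simp add: space_Fs,
          rule innovation_measurable, measurable)+
    have step_pos: "\<And>\<omega>. \<omega> \<in> space M \<Longrightarrow> posdef (P k \<omega>) \<and> 0 \<le> \<beta> k \<omega> \<and> 0 < \<mu> k \<omega>"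
      "\<And>\<omega>. \<omega> \<in> space M \<Longrightarrow> posdef (Pb k \<omega>) \<and> 0 \<le> \<beta>b k \<omega> \<and> 0 < \<mu>b k \<omega>"
      using pos \<beta>_nonneg \<mu>_bounds \<mu>_pos space_Fs by (metis order_less_le_trans)+
    note step = projected_recursion_step[OF Fs_Suc space_Fs IH(1,3) phi_meas \<beta>_measurable[OF IH(1,2)] S2_mu_meas A2_b_meas
        v_measurable(1) step_pos(1) D(1-3) S2_a S2_P S2_theta]
      projected_recursion_step[OF Fs_Suc space_Fs IH(2,4) phi_meas \<beta>b_measurable S1_mu_meas A2_b_meas
        v_measurable(2) step_pos(2) D(1-3) S1_a S1_P S1_theta]
    show ?case
      using step Fs_Suc_measurable by blast
  qed
  have order: "AE \<omega> in M. \<forall>k. L k \<omega> \<le> l k \<omega> \<and> l k \<omega> \<le> u k \<omega> \<and> u k \<omega> \<le> U k \<omega>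
      \<and> \<not> (L k \<omega> = l k \<omega> \<and> l k \<omega> = u k \<omega> \<and> u k \<omega> = U k \<omega>)"
    using A2_order A2_nondeg by eventually_elim auto
  have "AE \<omega> in M. \<psi> k \<omega> =
      mean_sgn_Sat (F (Suc k) \<omega>) (L k \<omega>) (l k \<omega>) (u k \<omega>) (U k \<omega>) (\<phi> k \<omega> \<bullet> \<theta>) (\<phi> k \<omega> \<bullet> \<theta>s k \<omega>)
      + corr (F (Suc k) \<omega>) (L k \<omega>) (l k \<omega>) (u k \<omega>) (U k \<omega>) (\<phi> k \<omega> \<bullet> \<theta>s k \<omega>)" for k
  proof -
    interpret cond_cdf M "Fs k" "\<epsilon> (Suc k)" "F (Suc k)" by (rule cdf)
    have [measurable]: "\<theta>s k \<in> borel_measurable (Fs k)" using adapted by blast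
    have "AE \<omega> in M. real_cond_exp M (Fs k)
        (\<lambda>\<omega>. sgn (y (Suc k) \<omega> - Sat (L k \<omega>) (l k \<omega>) (u k \<omega>) (U k \<omega>) (\<phi> k \<omega> \<bullet> \<theta>s k \<omega>))) \<omega>
      = mean_sgn_Sat (F (Suc k) \<omega>) (L k \<omega>) (l k \<omega>) (u k \<omega>) (U k \<omega>) (\<phi> k \<omega> \<bullet> \<theta>) (\<phi> k \<omega> \<bullet> \<theta>s k \<omega>)"
      using order by (intro cond_exp_sgn_Sat[where p="\<lambda>\<omega>. \<phi> k \<omega> \<bullet> \<theta>"] y_def)
        (measurable, auto elim: eventually_mono)
    then show ?thesis by eventually_elim (simp add: psi_def)
  qed
  then have psi: "AE \<omega> in M. \<forall>k. \<psi> k \<omega> =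
      mean_sgn_Sat (F (Suc k) \<omega>) (L k \<omega>) (l k \<omega>) (u k \<omega>) (U k \<omega>) (\<phi> k \<omega> \<bullet> \<theta>) (\<phi> k \<omega> \<bullet> \<theta>s k \<omega>)
      + corr (F (Suc k) \<omega>) (L k \<omega>) (l k \<omega>) (u k \<omega>) (U k \<omega>) (\<phi> k \<omega> \<bullet> \<theta>s k \<omega>)"
    by (simp add: AE_all_countable)
  show ?thesis
    using psi order A2_M A3_f AE_space
  proof eventually_elim
    case (elim \<omega>)
    obtain c1 c2 where c2: "\<And>k x. \<bar>x\<bar> \<le> max (2 * C) (C + Mc) \<Longrightarrow> c1 \<le> f (Suc k) \<omega> x \<and> f (Suc k) \<omega> x \<le> c2"
      and "0 < c1" using elim(4) by blast
    show ?case
    proof (intro exI allI)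
      fix k
      have F_lipschitz: "0 \<le> F (Suc k) \<omega> b - F (Suc k) \<omega> a \<and> F (Suc k) \<omega> b - F (Suc k) \<omega> a \<le> c2 * (b - a)"
        if "- max (2 * C) (C + Mc) \<le> a" "a \<le> b" "b \<le> max (2 * C) (C + Mc)" for a b
        using that c2 by (intro density_cdf.cdf_increment_bounds[OF density[OF elim(5)]]) auto
      have f_bound: "\<bar>f (Suc k) \<omega> x\<bar> \<le> c2" if "\<bar>x\<bar> \<le> max (2 * C) (C + Mc)" for x
        using c2[OF that, of k] \<open>0 < c1\<close> by auto
      have order: "L k \<omega> \<le> l k \<omega>" "l k \<omega> \<le> u k \<omega>" "u k \<omega> \<le> U k \<omega>"
        "\<not> (L k \<omega> = l k \<omega> \<and> l k \<omega> = u k \<omega> \<and> u k \<omega> = U k \<omega>)" "l k \<omega> \<le> Mc" "- u k \<omega> \<le> Mc"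
        using elim(2,3) by auto
      have radius: "2 * C \<le> max (2 * C) (C + Mc)" "C + Mc \<le> max (2 * C) (C + Mc)" by simp_all
      have "\<bar>\<phi> k \<omega> \<bullet> \<theta>\<bar> \<le> C" "\<bar>\<phi> k \<omega> \<bullet> \<theta>s k \<omega>\<bar> \<le> C" "\<bar>\<phi> k \<omega> \<bullet> \<theta>b k \<omega>\<bar> \<le> C"
        using bounded[OF elim(5)] by auto
      from sign_innovation_linearization_bound[OF F_lipschitz f_bound A3_half[OF elim(5)] order(1-4) this order(5,6) radius]
      show "\<bar>\<psi> k \<omega> - \<beta> k \<omega> * (\<phi> k \<omega> \<bullet> (\<theta> - \<theta>s k \<omega>))\<bar> \<le> 4 * c2 * \<bar>\<phi> k \<omega> \<bullet> (\<theta> - \<theta>b k \<omega>)\<bar>"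
        using elim(1) S2_beta[OF elim(5)] by (simp add: inner_diff_right)
    qed
  qed
qed

end
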